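(* Let $\mathcal{F}$ be a one-dimensional $p$-divisible formal group over $\mathbb{Z}_p$ of finite height, and for $n\in\mathbb{Z}$ let $[n]$ denote the multiplication-by-$n$ endomorphism of $\mathcal{F}$. Let $\alpha_1,\alpha_2\in p\mathbb{Z}_p$ with $v_p(\alpha_1)=v_p(\alpha_2)$. Then there exist $\phi\in\mathbb{Z}_p[[X,Y]]$ and an infinite set $S\subset\mathbb{N}^2$ such that $\phi([n](\alpha_1),[m](\alpha_2))=0$ for all $(n,m)\in S$, and $S$ is not contained in any finite union of lines (so the zeroes of $\phi$ along $S$ do not come from a translate of a formal subgroup of $\mathcal{F}^2$).
   Context: $v_p$ is the $p$-adic valuation. $[n](\alpha)$ is obtained by evaluating at $\alpha$ the power series in $\mathbb{Z}_p[[X]]$ giving multiplication by $n$ in the formal group law of $\mathcal{F}$. *)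

theory Defs
  imports Main "HOL-Computational_Algebra.Formal_Power_Series" "HOL-Library.Extended_Nat" "HOL-Library.Cardinality"
begin

unbundle fps_syntax

section \<open>The p-adic integers Z_p, with p = CARD('p)\<close>

text \<open>An element of Z_p is a coherent sequence of residues x_k in {0..<p^k} (its image in Z/p^k Z).\<close>

class nontriv_card = finite +
  assumes card_gt1: "1 < CARD('a)"

definition padic_coh :: "'p::nontriv_card itself \<Rightarrow> (nat \<Rightarrow> int) \<Rightarrow> bool" where
  "padic_coh _ x \<longleftrightarrow> (\<forall>k. 0 \<le> x k \<and> x k < int CARD('p) ^ k \<and> x (Suc k) mod int CARD('p) ^ k = x k)"

typedef ('p::nontriv_card) padic = "{x::nat \<Rightarrow> int. padic_coh TYPE('p) x}"
  morphisms digits Abs_padic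
  by (rule exI[of _ "\<lambda>_. 0"]) (simp add: padic_coh_def card_gt1)

setup_lifting type_definition_padic

lemma padic_pos: "0 < int CARD('p::nontriv_card) ^ k"
  using card_gt1[where 'a='p] by simp

lemma padic_mod_mod: "(a mod int CARD('p::nontriv_card) ^ Suc k) mod int CARD('p) ^ k = a mod int CARD('p) ^ k"
  by (rule mod_mod_cancel) simp

lemma coh_weak:
  assumes "padic_coh TYPE('p::nontriv_card) x"
  shows "x (Suc k) mod int CARD('p) ^ k = x k mod int CARD('p) ^ k" and "x k mod int CARD('p) ^ k = x k"
  using assms by (auto simp: padic_coh_def mod_pos_pos_trivial)

lemma coh_normalize:
  assumes "\<And>k. x (Suc k) mod int CARD('p::nontriv_card) ^ k = x k mod int CARD('p) ^ k"
  shows "padic_coh TYPE('p) (\<lambda>k. x k mod int CARD('p) ^ k)"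
  unfolding padic_coh_def
proof (intro allI conjI)
  fix k
  show "0 \<le> x k mod int CARD('p) ^ k" using padic_pos[where 'p='p] by (rule pos_mod_sign)
  show "x k mod int CARD('p) ^ k < int CARD('p) ^ k" using padic_pos[where 'p='p] by (rule pos_mod_bound)
  show "x (Suc k) mod int CARD('p) ^ Suc k mod int CARD('p) ^ k = x k mod int CARD('p) ^ k"
    unfolding padic_mod_mod by (rule assms)
qed

instantiation padic :: (nontriv_card) comm_ring_1
begin

lift_definition zero_padic :: "'a padic" is "\<lambda>_. 0"
  by (simp add: padic_coh_def padic_pos)

lift_definition one_padic :: "'a padic" is "\<lambda>k. 1 mod int CARD('a) ^ k"
  by (rule coh_normalize) simp

lift_definition plus_padic :: "'a padic \<Rightarrow> 'a padic \<Rightarrow> 'a padic"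
  is "\<lambda>x y k. (x k + y k) mod int CARD('a) ^ k"
  by (rule coh_normalize) (metis coh_weak(1) mod_add_eq)

lift_definition times_padic :: "'a padic \<Rightarrow> 'a padic \<Rightarrow> 'a padic"
  is "\<lambda>x y k. (x k * y k) mod int CARD('a) ^ k"
  by (rule coh_normalize) (metis coh_weak(1) mod_mult_eq)

lift_definition uminus_padic :: "'a padic \<Rightarrow> 'a padic"
  is "\<lambda>x k. (- x k) mod int CARD('a) ^ k"
  by (rule coh_normalize) (metis coh_weak(1) mod_minus_eq)

definition minus_padic :: "'a padic \<Rightarrow> 'a padic \<Rightarrow> 'a padic" where
  "minus_padic x y = x + (- y)"

instance
proof
  fix a b c :: "'a padic"
  show "a * b * c = a * (b * c)"
    by transfer (rule ext, metis mod_mult_left_eq mod_mult_right_eq mult.assoc)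
  show "a * b = b * a" by transfer (simp add: mult.commute)
  show "1 * a = a"
    by transfer (rule ext, metis coh_weak(2) mod_mult_left_eq mult_1)
  show "a + b + c = a + (b + c)"
    by transfer (rule ext, metis mod_add_left_eq mod_add_right_eq add.assoc)
  show "a + b = b + a" by transfer (simp add: add.commute)
  show "0 + a = a"
    by transfer (rule ext, metis coh_weak(2) add_0)
  show "- a + a = 0"
    by transfer (rule ext, metis mod_add_left_eq add.left_inverse mod_0)
  show "a - b = a + - b" by (simp add: minus_padic_def)
  show "(a + b) * c = a * c + b * c"
    by transfer (rule ext, metis mod_mult_left_eq mod_add_eq distrib_right)
  show "(0::'a padic) \<noteq> 1"
  proof transfer
    have "1 mod int CARD('a) ^ 1 = 1" using card_gt1[where 'a='a] by simp
    then show "(\<lambda>_. 0::int) \<noteq> (\<lambda>k. 1 mod int CARD('a) ^ k)" by (metis zero_neq_one)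
  qed
qed

end

definition padic_val :: "'p::nontriv_card padic \<Rightarrow> enat" where
  "padic_val x = Sup {enat k | k. (of_nat CARD('p) :: 'p padic) ^ k dvd x}"

section \<open>Evaluation of power series at points of pZ_p (p-adic limits of partial sums)\<close>

definition eval1 :: "'p::nontriv_card padic fps \<Rightarrow> 'p padic \<Rightarrow> 'p padic" where
  "eval1 f a = (THE z. \<forall>k. (of_nat CARD('p) :: 'p padic) ^ k dvd z - (\<Sum>i<k. f $ i * a ^ i))"

text \<open>Two-variable power series: an element phi of R[[X]][[Y]] with coefficient of X^i Y^j
  equal to phi \$ i \$ j.\<close>
definition eval2 :: "'p::nontriv_card padic fps fps \<Rightarrow> 'p padic \<Rightarrow> 'p padic \<Rightarrow> 'p padic" where
  "eval2 \<phi> a b = (THE z. \<forall>k. (of_nat CARD('p) :: 'p padic) ^ k dvd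
       z - (\<Sum>i<k. \<Sum>j<k. \<phi> $ i $ j * a ^ i * b ^ j))"

text \<open>Three-variable series in X, Y, Z: T \$ a \$ b \$ c is the coefficient of X^a Y^b Z^c.\<close>
definition X3 :: "'a::comm_ring_1 fps fps fps" where "X3 = fps_X"
definition Y3 :: "'a::comm_ring_1 fps fps fps" where "Y3 = fps_const fps_X"
definition Z3 :: "'a::comm_ring_1 fps fps fps" where "Z3 = fps_const (fps_const fps_X)"

text \<open>Substitution F(U,V) of three-variable series U, V without constant term into a
  two-variable series F (the sum is finite in each total degree).\<close>
definition subst2_3 :: "'a::comm_ring_1 fps fps \<Rightarrow> 'a fps fps fps \<Rightarrow> 'a fps fps fps \<Rightarrow> 'a fps fps fps" where
  "subst2_3 F U V = Abs_fps (\<lambda>a. Abs_fps (\<lambda>b. Abs_fps (\<lambda>c.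
      \<Sum>i\<le>a+b+c. \<Sum>j\<le>a+b+c. F $ i $ j * ((U ^ i * V ^ j) $ a $ b $ c))))"

definition subst2_1 :: "'a::comm_ring_1 fps fps \<Rightarrow> 'a fps \<Rightarrow> 'a fps \<Rightarrow> 'a fps" where
  "subst2_1 F u v = Abs_fps (\<lambda>a. \<Sum>i\<le>a. \<Sum>j\<le>a. F $ i $ j * ((u ^ i * v ^ j) $ a))"

definition formal_group_law :: "'a::comm_ring_1 fps fps \<Rightarrow> bool" where
  "formal_group_law F \<longleftrightarrow>
     F $ 0 $ 0 = 0 \<and> F $ 1 $ 0 = 1 \<and> F $ 0 $ 1 = 1 \<and>
     (\<forall>i j. F $ i $ j = F $ j $ i) \<and>
     subst2_3 F (subst2_3 F X3 Y3) Z3 = subst2_3 F X3 (subst2_3 F Y3 Z3)"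

primrec fgl_mult :: "'a::comm_ring_1 fps fps \<Rightarrow> nat \<Rightarrow> 'a fps" where
  "fgl_mult F 0 = 0"
| "fgl_mult F (Suc n) = subst2_1 F (fgl_mult F n) fps_X"

definition finite_height :: "'p::nontriv_card padic fps fps \<Rightarrow> bool" where
  "finite_height F \<longleftrightarrow> (\<exists>i. \<not> (of_nat CARD('p) :: 'p padic) dvd (fgl_mult F CARD('p) $ i))"

definition fgl_mult_at :: "'p::nontriv_card padic fps fps \<Rightarrow> nat \<Rightarrow> 'p padic \<Rightarrow> 'p padic" where
  "fgl_mult_at F n a = eval1 (fgl_mult F n) a"

definition is_line :: "(nat \<times> nat) set \<Rightarrow> bool" where
  "is_line L \<longleftrightarrow> (\<exists>a b c :: real. (a, b) \<noteq> (0, 0) \<and> L = {(x, y). a * real x + b * real y = c})"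

end

theory Submission
  imports Defs "HOL-Computational_Algebra.Polynomial" "HOL-Number_Theory.Cong"
begin

text \<open>
  Let \<open>T y = F(y, \<alpha>)\<close>, so that \<open>[n](\<alpha>) = T\<^sup>n(0)\<close>. Because \<open>F(X, 0) = X\<close>, we have
  \<open>T y - T y' = (y - y') (1 + F\<^sub>1\<^sub>1 \<alpha>)\<close> modulo \<open>p \<alpha> (y - y')\<close>, and \<open>(1 + F\<^sub>1\<^sub>1 \<alpha>)^p = 1\<close>
  modulo \<open>p \<alpha>\<close>. Hence \<open>z n = [p n](\<alpha>1)\<close> satisfies \<open>z (n + k) - z n = z k (1 + p^2 r)\<close> for some
  \<open>r\<close>, and likewise \<open>w n = [p n](\<alpha>2)\<close>.

  If \<open>z 1 = 0\<close> or \<open>w 1 = 0\<close>, that sequence vanishes identically and \<open>\<phi> = X\<close> or \<open>\<phi> = Y\<close> works.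
  Otherwise let \<open>p^E\<close> exactly divide \<open>z 1\<close>. Then \<open>v_p (z k) = E + v_p k\<close>, so \<open>z\<close> induces a
  bijection from \<open>Z/p^m\<close> onto \<open>p^E Z_p / p^(E+m) Z_p\<close>: every element of \<open>p^E Z_p\<close> is approximated
  by values \<open>z n\<close> with \<open>n\<close> arbitrarily large; also, the \<open>w k\<close> are pairwise distinct. Newton
  interpolation at the nodes \<open>w 0, w 1, \<dots>\<close> gives polynomials \<open>G_k\<close> and indices \<open>n_k \<ge> k^2\<close> with
  \<open>z n_j = p^E G_k (w j)\<close> for \<open>j \<le> k\<close>. As the coefficient of \<open>X^i\<close> in \<open>(X - w 0) \<cdots> (X - w (k-1))\<close>
  is divisible by \<open>p^(k-i)\<close>, the \<open>G_k\<close> converge coefficientwise to a power series \<open>g\<close>, and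
  \<open>\<phi> = X - p^E g(Y)\<close> vanishes at the points \<open>([p n_k](\<alpha>1), [p k](\<alpha>2))\<close>. Since \<open>n_k\<close> grows
  quadratically, no finite union of lines contains them.
\<close>

lemma dvd_diff_mult_cong:
  "(m::'a::comm_ring_1) dvd x - x' \<Longrightarrow> m dvd y - y' \<Longrightarrow> m dvd x * y - x' * y'"
proof -
  assume "m dvd x - x'" "m dvd y - y'"
  moreover have "x * y - x' * y' = x * (y - y') + (x - x') * y'" by (simp add: algebra_simps)
  ultimately show ?thesis by simp
qed

lemma dvd_diff_power_cong: "(m::'a::comm_ring_1) dvd x - x' \<Longrightarrow> m dvd x ^ n - x' ^ n"
  by (induction n) (simp_all add: dvd_diff_mult_cong)

lemma dvd_diff_sum_cong:
  "(\<And>i. i \<in> A \<Longrightarrow> (m::'a::comm_ring_1) dvd f i - g i) \<Longrightarrow> m dvd sum f A - sum g A"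
  by (simp add: sum_subtractf[symmetric] dvd_sum)

lemma dvd_diff_trans: "(m::'a::comm_ring_1) dvd x - y \<Longrightarrow> m dvd y - z \<Longrightarrow> m dvd x - z"
  using dvd_add[of m "x - y" "y - z"] by simp

lemma dvd_diff_commute: "(m::'a::comm_ring_1) dvd x - y \<Longrightarrow> m dvd y - x"
  by (metis dvd_minus_iff minus_diff_eq)

section \<open>Digits of p-adic integers\<close>

abbreviation \<p> :: "'p::nontriv_card padic" where "\<p> \<equiv> of_nat CARD('p)"

lemma card_gt_1_int: "1 < int CARD('p::nontriv_card)"
  using card_gt1[where 'a='p] by simp

lemma digits_bounds: "0 \<le> digits (x::'p::nontriv_card padic) k" "digits x k < int CARD('p) ^ k"
  using digits[of x] by (auto simp: padic_coh_def)

lemma digits_mod_power: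
  assumes "j \<le> k"
  shows "digits (x::'p::nontriv_card padic) k mod int CARD('p) ^ j = digits x j"
  using assms
proof (induction k rule: dec_induct)
  case base
  show ?case using digits_bounds[of x j] by simp
next
  case (step k)
  have "int CARD('p) ^ j dvd int CARD('p) ^ k" using step.hyps(1) by (simp add: le_imp_power_dvd)
  then have "digits x (Suc k) mod int CARD('p) ^ j
      = digits x (Suc k) mod int CARD('p) ^ k mod int CARD('p) ^ j"
    by (simp add: mod_mod_cancel)
  also have "digits x (Suc k) mod int CARD('p) ^ k = digits x k"
    using digits[of x] by (simp add: padic_coh_def)
  finally show ?case using step.IH by simp
qed

lemma digits_add: "digits (x + y :: 'p::nontriv_card padic) k = (digits x k + digits y k) mod int CARD('p) ^ k"
  by (simp add: plus_padic.rep_eq)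

lemma digits_mult: "digits (x * y :: 'p::nontriv_card padic) k = (digits x k * digits y k) mod int CARD('p) ^ k"
  by (simp add: times_padic.rep_eq)

lemma digits_diff: "digits (x - y :: 'p::nontriv_card padic) k = (digits x k - digits y k) mod int CARD('p) ^ k"
proof -
  have "digits (x + - y) k = (digits x k + (- digits y k) mod int CARD('p) ^ k) mod int CARD('p) ^ k"
    by (simp only: digits_add uminus_padic.rep_eq)
  then show ?thesis by (metis diff_conv_add_uminus mod_add_right_eq)
qed

lemma digits_one: "digits (1 :: 'p::nontriv_card padic) k = 1 mod int CARD('p) ^ k"
  by (simp add: one_padic.rep_eq)

lemma digits_zero: "digits (0 :: 'p::nontriv_card padic) k = 0"
  by (simp add: zero_padic.rep_eq)

lemma digits_of_nat: "digits (of_nat n :: 'p::nontriv_card padic) k = int n mod int CARD('p) ^ k"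
proof (induction n)
  case (Suc n)
  have "digits (1 + of_nat n :: 'p padic) k
      = (1 mod int CARD('p) ^ k + int n mod int CARD('p) ^ k) mod int CARD('p) ^ k"
    by (simp add: digits_add digits_one Suc.IH)
  then show ?case by (simp add: mod_add_eq add.commute)
qed (simp add: digits_zero)

lemma digits_p_power: "digits ((\<p> :: 'p::nontriv_card padic) ^ n) k = int CARD('p) ^ n mod int CARD('p) ^ k"
  by (simp flip: of_nat_power add: digits_of_nat)

lemma p_power_dvd_if_digits_eq_0:
  assumes z0: "digits (z :: 'p::nontriv_card padic) k = 0"
  shows "\<p> ^ k dvd z"
proof -
  define q where "q = int CARD('p)"
  have q1: "1 < q" using card_gt_1_int q_def by simp
  then have qk: "0 < q ^ k" by simp
  define d where "d = (\<lambda>j. digits z (j + k))"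
  have d_dvd: "q ^ k dvd d j" for j
  proof -
    have "d j mod q ^ k = digits z k" unfolding d_def q_def by (rule digits_mod_power) simp
    then show ?thesis using z0 by (simp add: mod_eq_0_iff_dvd)
  qed
  \<comment> \<open>the digits of the quotient are those of \<open>z\<close> shifted by \<open>k\<close> places\<close>
  define w where "w = (\<lambda>j. d j div q ^ k)"
  have dw: "d j = q ^ k * w j" for j using d_dvd[of j] unfolding w_def by simp
  have coh: "padic_coh TYPE('p) w"
    unfolding padic_coh_def
  proof (intro allI conjI)
    fix j
    have r: "0 \<le> d j" "d j < q ^ (j + k)" unfolding d_def q_def using digits_bounds by auto
    show "0 \<le> w j" using r qk dw by (simp add: zero_le_mult_iff)
    have "q ^ k * w j < q ^ k * q ^ j" using r dw by (simp add: power_add mult.commute)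
    then show "w j < int CARD('p) ^ j" using qk q_def by simp
    have "d (Suc j) mod q ^ (j + k) = d j" unfolding d_def q_def by (rule digits_mod_power) simp
    then have "q ^ k * (w (Suc j) mod q ^ j) = q ^ k * w j"
      using dw[of "Suc j"] dw[of j] by (simp add: mod_mult_mult1 power_add mult.commute)
    then show "w (Suc j) mod int CARD('p) ^ j = w j" using qk q_def by simp
  qed
  define W :: "'p padic" where "W = Abs_padic w"
  have dW: "digits W = w" unfolding W_def using coh by (simp add: Abs_padic_inverse)
  have "\<p> ^ k * W = z"
  proof (rule digits_inject[THEN iffD1], rule ext)
    fix j
    show "digits (\<p> ^ k * W) j = digits z j"
    proof (cases "j \<le> k")
      case True
      then have "q ^ k mod q ^ j = 0" by (simp add: le_imp_power_dvd)
      then show ?thesis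
        using digits_mod_power[OF True, of z] z0
        by (simp add: digits_mult digits_p_power q_def)
    next
      case False
      then have "q ^ k mod q ^ j = q ^ k" using q1
        by (intro mod_pos_pos_trivial) (auto intro: power_strict_increasing)
      then have "digits (\<p> ^ k * W) j = d j mod q ^ j"
        by (simp add: digits_mult digits_p_power dW dw mod_mult_left_eq flip: q_def)
      also have "\<dots> = digits z j" unfolding d_def q_def by (rule digits_mod_power) simp
      finally show ?thesis .
    qed
  qed
  then show ?thesis by (metis dvd_triv_left)
qed

lemma p_power_dvd_iff_digits_eq_0: "(\<p> :: 'p::nontriv_card padic) ^ k dvd z \<longleftrightarrow> digits z k = 0"
proof
  assume "\<p> ^ k dvd z"
  then obtain w where "z = \<p> ^ k * w" by blast
  then show "digits z k = 0" by (simp add: digits_mult digits_p_power)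
qed (rule p_power_dvd_if_digits_eq_0)

lemma p_power_dvd_diff_iff_digits_eq:
  "(\<p> :: 'p::nontriv_card padic) ^ k dvd x - y \<longleftrightarrow> digits x k = digits y k"
proof -
  define q where "q = int CARD('p)"
  have r: "\<bar>digits x k - digits y k\<bar> < q ^ k"
    using digits_bounds[of x k] digits_bounds[of y k] q_def by auto
  have "\<p> ^ k dvd x - y \<longleftrightarrow> q ^ k dvd digits x k - digits y k"
    by (simp add: p_power_dvd_iff_digits_eq_0 digits_diff mod_eq_0_iff_dvd q_def)
  also have "\<dots> \<longleftrightarrow> digits x k = digits y k"
  proof
    assume "q ^ k dvd digits x k - digits y k"
    then show "digits x k = digits y k"
      using r by (metis dvd_imp_le_int abs_le_iff eq_iff_diff_eq_0 linorder_not_less)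
  qed simp
  finally show ?thesis .
qed

lemma padic_eqI_cong: "(\<And>k. (\<p> :: 'p::nontriv_card padic) ^ k dvd x - y) \<Longrightarrow> x = y"
  by (metis digits_inject p_power_dvd_diff_iff_digits_eq ext)

lemma padic_limit_exists:
  fixes s :: "nat \<Rightarrow> 'p::nontriv_card padic"
  assumes "\<And>k. \<p> ^ k dvd s (Suc k) - s k"
  shows "\<exists>z. \<forall>k. \<p> ^ k dvd z - s k"
proof -
  define w where "w = (\<lambda>k. digits (s k) k)"
  have "padic_coh TYPE('p) w"
    unfolding padic_coh_def
  proof (intro allI conjI)
    fix k
    show "0 \<le> w k" "w k < int CARD('p) ^ k" unfolding w_def using digits_bounds by auto
    have "digits (s (Suc k)) (Suc k) mod int CARD('p) ^ k = digits (s (Suc k)) k"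
      by (rule digits_mod_power) simp
    also have "\<dots> = digits (s k) k" using assms[of k] p_power_dvd_diff_iff_digits_eq by blast
    finally show "w (Suc k) mod int CARD('p) ^ k = w k" unfolding w_def .
  qed
  then have "digits (Abs_padic w :: 'p padic) = w" by (simp add: Abs_padic_inverse)
  then have "\<forall>k. \<p> ^ k dvd Abs_padic w - s k"
    by (simp add: p_power_dvd_diff_iff_digits_eq w_def)
  then show ?thesis by blast
qed

lemma p_power_neq_0: "(\<p> :: 'p::nontriv_card padic) ^ n \<noteq> 0"
proof
  assume "(\<p> :: 'p padic) ^ n = 0"
  then have "digits ((\<p> :: 'p padic) ^ n) (Suc n) = 0" by (simp add: digits_zero)
  moreover have "int CARD('p) ^ n mod int CARD('p) ^ Suc n = int CARD('p) ^ n"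
    using card_gt_1_int[where 'p='p] by (intro mod_pos_pos_trivial) auto
  ultimately show False using card_gt_1_int[where 'p='p] by (simp add: digits_p_power)
qed

lemma int_power_dvd_digits:
  assumes "(\<p> :: 'p::nontriv_card padic) ^ E dvd x" "E \<le> V"
  shows "int CARD('p) ^ E dvd digits x V"
proof -
  obtain y where "x = \<p> ^ E * y" using assms(1) by blast
  moreover have "int CARD('p) ^ E dvd int CARD('p) ^ V" using assms(2) by (simp add: le_imp_power_dvd)
  ultimately show ?thesis by (simp add: digits_mult digits_p_power dvd_mod)
qed

lemma digits_mem_multiples:
  assumes "(\<p> :: 'p::nontriv_card padic) ^ E dvd x"
  shows "digits x (E + m) \<in> (\<lambda>s. int CARD('p) ^ E * s) ` {0..<int CARD('p) ^ m}"
proof -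
  obtain s where s: "digits x (E + m) = int CARD('p) ^ E * s"
    using int_power_dvd_digits[OF assms, of "E + m"] by auto
  have "0 \<le> int CARD('p) ^ E * s" "int CARD('p) ^ E * s < int CARD('p) ^ E * int CARD('p) ^ m"
    using digits_bounds[of x "E + m"] s by (simp_all add: power_add)
  moreover have "0 < int CARD('p) ^ E" using card_gt_1_int[where 'p='p] by simp
  ultimately have "s \<in> {0..<int CARD('p) ^ m}" by (simp add: zero_le_mult_iff)
  with s show ?thesis by blast
qed

lemma p_dvd_of_nat_iff: "(\<p> :: 'p::nontriv_card padic) dvd of_nat n \<longleftrightarrow> CARD('p) dvd n"
  using p_power_dvd_iff_digits_eq_0[of 1 "of_nat n :: 'p padic"]
  by (simp add: digits_of_nat) (metis zmod_int mod_eq_0_iff_dvd of_nat_eq_0_iff)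

lemma not_p_dvd_1_plus_p_mult: "\<not> (\<p> :: 'p::nontriv_card padic) dvd 1 + \<p> * r"
proof
  assume "\<p> dvd 1 + \<p> * r"
  then have "\<p> dvd (1::'p padic)" by (metis dvd_add_right_iff dvd_triv_left add.commute)
  then have "(1::nat) mod CARD('p) = 0"
    using p_dvd_of_nat_iff[where 'p='p, of 1] by simp
  then show False using card_gt1[where 'a='p] by simp
qed

lemma one_minus_p_mult_dvd_one: "1 - (\<p> :: 'p::nontriv_card padic) * t dvd 1"
proof -
  define s where "s = (\<lambda>K. \<Sum>i<K. ((\<p> :: 'p padic) * t) ^ i)"
  have "\<p> ^ k dvd s (Suc k) - s k" for k
    by (simp add: s_def power_mult_distrib)
  then obtain g where g: "\<forall>k. \<p> ^ k dvd g - s k" using padic_limit_exists by blast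
  have "\<p> ^ K dvd (1 - \<p> * t) * g - 1" for K
  proof -
    have "(1 - \<p> * t) * s K = 1 - (\<p> * t) ^ K"
      unfolding s_def by (rule one_diff_power_eq[symmetric])
    then have "(1 - \<p> * t) * g - 1 = (1 - \<p> * t) * (g - s K) - \<p> ^ K * t ^ K"
      by (simp add: algebra_simps)
    then show ?thesis using g by simp
  qed
  then have "(1 - \<p> * t) * g = 1" by (rule padic_eqI_cong)
  then show ?thesis by (metis dvdI)
qed

section \<open>The ring of p-adic integers for prime p\<close>

locale prime_card =
  fixes ty :: "'p::nontriv_card itself"
  assumes prime_card: "prime CARD('p)"
begin

lemma p_dvd_multD:
  assumes "(\<p> :: 'p padic) dvd x * y" shows "\<p> dvd x \<or> \<p> dvd y"
proof -
  define q where "q = int CARD('p)"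
  have "prime q" using prime_card q_def by simp
  moreover have "(digits x 1 * digits y 1) mod q = 0"
    using assms p_power_dvd_iff_digits_eq_0[of 1 "x * y"] by (simp add: digits_mult q_def)
  ultimately have "q dvd digits x 1 \<or> q dvd digits y 1"
    by (simp add: mod_eq_0_iff_dvd prime_dvd_mult_iff)
  moreover have "0 \<le> digits x 1" "digits x 1 < q" "0 \<le> digits y 1" "digits y 1 < q"
    using digits_bounds[of x 1] digits_bounds[of y 1] q_def by auto
  ultimately have "digits x 1 = 0 \<or> digits y 1 = 0"
    using zdvd_not_zless by (metis le_less)
  then show ?thesis using p_power_dvd_iff_digits_eq_0[of 1] by auto
qed

lemma exists_inverse_mod_p:
  assumes "\<not> (\<p> :: 'p padic) dvd x" shows "\<exists>e. \<p> dvd x * of_nat e - 1"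
proof -
  define a where "a = nat (digits x 1)"
  have r: "0 \<le> digits x 1" "digits x 1 < int CARD('p)" using digits_bounds[of x 1] by auto
  then have a: "int a = digits x 1" by (simp add: a_def)
  have "digits x 1 \<noteq> 0" using assms p_power_dvd_iff_digits_eq_0[of 1 x] by auto
  then have "\<not> CARD('p) dvd a" using r a by (simp add: nat_dvd_not_less)
  then have "coprime a CARD('p)" using prime_card prime_imp_coprime coprime_commute by blast
  then obtain e where "[a * e = Suc 0] (mod CARD('p))" using cong_solve_coprime_nat by blast
  then have "a * e mod CARD('p) = 1" using prime_gt_1_nat[OF prime_card] by (simp add: cong_def)
  have "digits (x * of_nat e) 1 = int a * (int e mod int CARD('p)) mod int CARD('p)"
    by (simp add: digits_mult digits_of_nat a)
  also have "\<dots> = int (a * e mod CARD('p))" by (simp add: mod_mult_right_eq zmod_int)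
  also have "\<dots> = digits (1 :: 'p padic) 1"
    using \<open>a * e mod CARD('p) = 1\<close> card_gt_1_int[where 'p='p] by (simp add: digits_one)
  finally show ?thesis using p_power_dvd_diff_iff_digits_eq[of 1] by auto
qed

lemma dvd_one_iff_not_p_dvd: "(x :: 'p padic) dvd 1 \<longleftrightarrow> \<not> \<p> dvd x"
proof
  assume "x dvd 1"
  then show "\<not> \<p> dvd x"
    using not_p_dvd_1_plus_p_mult[where 'p='p, of 0] by (metis add_0_right dvd_trans mult_zero_right)
next
  assume "\<not> \<p> dvd x"
  then obtain e c where "x * of_nat e - 1 = \<p> * c" using exists_inverse_mod_p by blast
  then have "x * of_nat e = 1 - \<p> * (- c)" by (simp add: algebra_simps)
  then have "x * of_nat e dvd 1" using one_minus_p_mult_dvd_one by metis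
  then show "x dvd 1" by (rule dvd_mult_left)
qed

lemma padic_factor_p_power:
  assumes "(x :: 'p padic) \<noteq> 0" shows "\<exists>m u. x = \<p> ^ m * u \<and> \<not> \<p> dvd u"
proof -
  have "\<exists>k. \<not> \<p> ^ k dvd x" using assms padic_eqI_cong[of x 0] by auto
  define k where "k = (LEAST k. \<not> (\<p> :: 'p padic) ^ k dvd x)"
  have nk: "\<not> \<p> ^ k dvd x" unfolding k_def by (rule LeastI_ex) fact
  then obtain m where km: "k = Suc m" by (cases k) auto
  have "\<p> ^ m dvd x" using not_less_Least[of m "\<lambda>k. \<not> (\<p> :: 'p padic) ^ k dvd x"] km k_def by auto
  then obtain u where u: "x = \<p> ^ m * u" by blast
  have "\<not> \<p> dvd u"
  proof
    assume "\<p> dvd u"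
    then have "\<p> ^ m * \<p> dvd x" using u by (simp add: mult_dvd_mono)
    then show False using nk km by (simp add: mult.commute)
  qed
  then show ?thesis using u by blast
qed

lemma padic_no_zero_divisors:
  assumes "(x :: 'p padic) * y = 0" shows "x = 0 \<or> y = 0"
proof (rule ccontr)
  assume "\<not> (x = 0 \<or> y = 0)"
  then obtain m u n w where x: "x = \<p> ^ m * u" "\<not> \<p> dvd u" and y: "y = \<p> ^ n * w" "\<not> \<p> dvd w"
    using padic_factor_p_power by metis
  have "u * w dvd 1" using x(2) y(2) p_dvd_multD dvd_one_iff_not_p_dvd by blast
  then obtain v where "1 = u * w * v" by (rule dvdE)
  moreover have "\<p> ^ (m + n) * (u * w) = 0" using assms x y by (simp add: power_add algebra_simps)
  ultimately show False using p_power_neq_0 by (metis mult.assoc mult_1_right mult_zero_left)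
qed

lemma padic_mult_left_cancel: "(a :: 'p padic) \<noteq> 0 \<Longrightarrow> a * b = a * c \<Longrightarrow> b = c"
  using padic_no_zero_divisors[of a "b - c"] by (simp add: right_diff_distrib)

lemma p_power_dvd_p_power_mult_unit:
  assumes "(\<p> :: 'p padic) ^ V dvd \<p> ^ m * u" "\<not> \<p> dvd u" shows "V \<le> m"
proof (rule ccontr)
  assume "\<not> V \<le> m"
  then have "\<p> ^ Suc m dvd \<p> ^ m * u" using assms(1) le_imp_power_dvd dvd_trans
    by (metis not_less_eq_eq)
  then obtain c where "\<p> ^ m * u = \<p> ^ m * (\<p> * c)" by (auto simp: algebra_simps)
  then have "u = \<p> * c" using padic_mult_left_cancel p_power_neq_0 by blast
  then show False using assms(2) by simp
qed

lemma dvd_p_power_if_nonzero: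
  assumes "(d :: 'p padic) \<noteq> 0" shows "\<exists>m. d dvd \<p> ^ m"
proof -
  obtain m u where "d = \<p> ^ m * u" "\<not> \<p> dvd u" using padic_factor_p_power assms by blast
  then obtain v where "1 = u * v" using dvd_one_iff_not_p_dvd by (metis dvdE)
  then have "\<p> ^ m = d * v" using \<open>d = \<p> ^ m * u\<close> by (metis mult.assoc mult_1_right)
  then show ?thesis by (metis dvdI)
qed

lemma dvd_mult_cancel_not_p_dvd:
  assumes "m dvd a * (w :: 'p padic)" "\<not> \<p> dvd w" shows "m dvd a"
proof -
  obtain v where "1 = w * v" using assms(2) dvd_one_iff_not_p_dvd by (metis dvdE)
  then have "a = a * w * v" by (simp add: mult.assoc)
  then show ?thesis using assms(1) by (metis dvd_mult2)
qed

lemma dvd_if_approx_by_multiples: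
  assumes "\<And>K. \<exists>r. (\<p> :: 'p padic) ^ K dvd s - d * r" shows "d dvd s"
proof (cases "d = 0")
  case True
  then show ?thesis using assms padic_eqI_cong[of s 0] by simp
next
  case False
  then obtain m where "d dvd \<p> ^ m" using dvd_p_power_if_nonzero by blast
  moreover obtain r where "\<p> ^ m dvd s - d * r" using assms by blast
  ultimately have "d dvd s - d * r" by (rule dvd_trans)
  then show ?thesis by (metis diff_add_cancel dvd_add dvd_triv_left)
qed

end

section \<open>Evaluating power series at points of pZ_p\<close>

lemma p_power_dvd_power: "(\<p> :: 'p::nontriv_card padic) dvd a \<Longrightarrow> K \<le> n \<Longrightarrow> \<p> ^ K dvd a ^ n"
  by (metis dvd_power_same le_imp_power_dvd dvd_trans)

definition partial_sum1 :: "'p::nontriv_card padic fps \<Rightarrow> 'p padic \<Rightarrow> nat \<Rightarrow> 'p padic" where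
  "partial_sum1 f a K = (\<Sum>i<K. f $ i * a ^ i)"

definition partial_sum2 ::
    "'p::nontriv_card padic fps fps \<Rightarrow> 'p padic \<Rightarrow> 'p padic \<Rightarrow> nat \<Rightarrow> 'p padic" where
  "partial_sum2 \<phi> a b K = (\<Sum>i<K. \<Sum>j<K. \<phi> $ i $ j * a ^ i * b ^ j)"

lemma eval1_eqI:
  assumes "\<And>K. (\<p> :: 'p::nontriv_card padic) ^ K dvd z - partial_sum1 f a K"
  shows "eval1 f a = z"
  unfolding eval1_def
proof (rule the_equality)
  show "\<forall>k. \<p> ^ k dvd z - (\<Sum>i<k. f $ i * a ^ i)" using assms by (simp add: partial_sum1_def)
  fix y assume "\<forall>k. (\<p> :: 'p padic) ^ k dvd y - (\<Sum>i<k. f $ i * a ^ i)"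
  then have "\<p> ^ k dvd y - z" for k
    using dvd_diff_trans[OF _ dvd_diff_commute[OF assms]] by (simp add: partial_sum1_def)
  then show "y = z" by (rule padic_eqI_cong)
qed

lemma eval2_eqI:
  assumes "\<And>K. (\<p> :: 'p::nontriv_card padic) ^ K dvd z - partial_sum2 \<phi> a b K"
  shows "eval2 \<phi> a b = z"
  unfolding eval2_def
proof (rule the_equality)
  show "\<forall>k. \<p> ^ k dvd z - (\<Sum>i<k. \<Sum>j<k. \<phi> $ i $ j * a ^ i * b ^ j)"
    using assms by (simp add: partial_sum2_def)
  fix y assume "\<forall>k. (\<p> :: 'p padic) ^ k dvd y - (\<Sum>i<k. \<Sum>j<k. \<phi> $ i $ j * a ^ i * b ^ j)"
  then have "\<p> ^ k dvd y - z" for k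
    using dvd_diff_trans[OF _ dvd_diff_commute[OF assms]] by (simp add: partial_sum2_def)
  then show "y = z" by (rule padic_eqI_cong)
qed

lemma eval1_approx:
  assumes "(\<p> :: 'p::nontriv_card padic) dvd a"
  shows "\<p> ^ K dvd eval1 f a - partial_sum1 f a K"
proof -
  have "\<p> ^ k dvd partial_sum1 f a (Suc k) - partial_sum1 f a k" for k
    using p_power_dvd_power[OF assms, of k k] by (simp add: partial_sum1_def)
  then obtain z where z: "\<forall>k. \<p> ^ k dvd z - partial_sum1 f a k"
    using padic_limit_exists[of "partial_sum1 f a"] by blast
  then have "eval1 f a = z" by (intro eval1_eqI) auto
  then show ?thesis using z by simp
qed

lemma eval2_approx:
  assumes a: "(\<p> :: 'p::nontriv_card padic) dvd a" and b: "\<p> dvd b"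
  shows "\<p> ^ K dvd eval2 \<phi> a b - partial_sum2 \<phi> a b K"
proof -
  have "\<p> ^ k dvd partial_sum2 \<phi> a b (Suc k) - partial_sum2 \<phi> a b k" for k
  proof -
    have "partial_sum2 \<phi> a b (Suc k) - partial_sum2 \<phi> a b k =
      (\<Sum>i<k. \<phi> $ i $ k * a ^ i * b ^ k) + (\<Sum>j<Suc k. \<phi> $ k $ j * a ^ k * b ^ j)"
      by (simp add: partial_sum2_def sum.distrib algebra_simps)
    moreover have "\<p> ^ k dvd (\<Sum>i<k. \<phi> $ i $ k * a ^ i * b ^ k)"
      using p_power_dvd_power[OF b, of k k] by (intro dvd_sum) simp
    moreover have "\<p> ^ k dvd (\<Sum>j<Suc k. \<phi> $ k $ j * a ^ k * b ^ j)"
      using p_power_dvd_power[OF a, of k k] by (intro dvd_sum) (simp add: mult.commute mult.left_commute)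
    ultimately show ?thesis by simp
  qed
  then obtain z where z: "\<forall>k. \<p> ^ k dvd z - partial_sum2 \<phi> a b k"
    using padic_limit_exists[of "partial_sum2 \<phi> a b"] by blast
  then have "eval2 \<phi> a b = z" by (intro eval2_eqI) auto
  then show ?thesis using z by simp
qed

lemma eval1_p_dvd: "(\<p> :: 'p::nontriv_card padic) dvd a \<Longrightarrow> f $ 0 = 0 \<Longrightarrow> \<p> dvd eval1 f a"
  using eval1_approx[of a 1 f] by (simp add: partial_sum1_def)

lemma eval2_p_dvd:
  "(\<p> :: 'p::nontriv_card padic) dvd a \<Longrightarrow> \<p> dvd b \<Longrightarrow> \<phi> $ 0 $ 0 = 0 \<Longrightarrow>
    \<p> dvd eval2 \<phi> a b"
  using eval2_approx[of a b 1 \<phi>] by (simp add: partial_sum2_def)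

lemma partial_sum1_mult:
  assumes a: "(\<p> :: 'p::nontriv_card padic) dvd a"
  shows "\<p> ^ K dvd partial_sum1 (f * g) a K - partial_sum1 f a K * partial_sum1 g a K"
proof -
  define h where "h = (\<lambda>(c, d). f $ c * g $ d * a ^ (c + d))"
  have "partial_sum1 (f * g) a K = sum h {(c, d). c + d < K}"
    unfolding sum.triangle_reindex partial_sum1_def h_def fps_mult_nth
    by (simp add: sum_distrib_right atLeast0AtMost)
  moreover have "partial_sum1 f a K * partial_sum1 g a K = sum h ({..<K} \<times> {..<K})"
    unfolding partial_sum1_def h_def sum_product sum.cartesian_product
    by (simp add: power_add algebra_simps)
  moreover have "sum h ({..<K} \<times> {..<K}) - sum h {(c, d). c + d < K}
      = sum h ({..<K} \<times> {..<K} - {(c, d). c + d < K})"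
    by (rule sum_diff[symmetric]) auto
  moreover have "\<p> ^ K dvd sum h ({..<K} \<times> {..<K} - {(c, d). c + d < K})"
    using p_power_dvd_power[OF a] by (intro dvd_sum) (auto simp: h_def)
  ultimately show ?thesis by (metis dvd_diff_commute)
qed

lemma partial_sum1_power:
  assumes a: "(\<p> :: 'p::nontriv_card padic) dvd a"
  shows "\<p> ^ K dvd partial_sum1 (f ^ n) a K - partial_sum1 f a K ^ n"
proof (induction n)
  case 0
  have "K = 0 \<or> partial_sum1 1 a K = 1"
    by (cases K) (simp_all add: partial_sum1_def sum.lessThan_Suc_shift del: sum.lessThan_Suc)
  then show ?case by auto
next
  case (Suc n)
  have "\<p> ^ K dvd partial_sum1 f a K * partial_sum1 (f ^ n) a K - partial_sum1 f a K * partial_sum1 f a K ^ n"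
    using Suc.IH by (intro dvd_diff_mult_cong) simp_all
  with partial_sum1_mult[OF a] show ?case
    unfolding power_Suc by (rule dvd_diff_trans)
qed

lemma partial_sum1_X_power:
  assumes a: "(\<p> :: 'p::nontriv_card padic) dvd a"
  shows "\<p> ^ K dvd partial_sum1 (fps_X ^ j) a K - a ^ j"
proof -
  have "partial_sum1 (fps_X ^ j) a K = (\<Sum>c<K. if c = j then a ^ c else 0)"
    unfolding partial_sum1_def fps_X_power_nth by (intro sum.cong) auto
  also have "\<dots> = (if j < K then a ^ j else 0)" by simp
  finally show ?thesis using p_power_dvd_power[OF a, of K j] by auto
qed

lemma partial_sum1_subst2_1_X:
  assumes u0: "u $ 0 = 0"
  shows "(\<Sum>i<K. \<Sum>j<K. F $ i $ j * partial_sum1 (u ^ i * fps_X ^ j) a K)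
    = partial_sum1 (subst2_1 F u fps_X) a K"
proof -
  have "(\<Sum>i<K. \<Sum>j<K. F $ i $ j * partial_sum1 (u ^ i * fps_X ^ j) a K)
      = (\<Sum>c<K. (\<Sum>i<K. \<Sum>j<K. F $ i $ j * (u ^ i * fps_X ^ j) $ c) * a ^ c)"
  proof -
    have "(\<Sum>i<K. \<Sum>j<K. F $ i $ j * partial_sum1 (u ^ i * fps_X ^ j) a K)
        = (\<Sum>i<K. \<Sum>j<K. \<Sum>c<K. F $ i $ j * ((u ^ i * fps_X ^ j) $ c * a ^ c))"
      by (simp only: partial_sum1_def sum_distrib_left)
    also have "\<dots> = (\<Sum>i<K. \<Sum>c<K. \<Sum>j<K. F $ i $ j * ((u ^ i * fps_X ^ j) $ c * a ^ c))"
      by (rule sum.cong[OF refl], rule sum.swap)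
    also have "\<dots> = (\<Sum>c<K. \<Sum>i<K. \<Sum>j<K. F $ i $ j * ((u ^ i * fps_X ^ j) $ c * a ^ c))"
      by (rule sum.swap)
    also have "\<dots> = (\<Sum>c<K. (\<Sum>i<K. \<Sum>j<K. F $ i $ j * (u ^ i * fps_X ^ j) $ c) * a ^ c)"
      by (simp only: sum_distrib_right mult.assoc)
    finally show ?thesis .
  qed
  also have "\<dots> = (\<Sum>c<K. (\<Sum>i\<le>c. \<Sum>j\<le>c. F $ i $ j * (u ^ i * fps_X ^ j) $ c) * a ^ c)"
  proof (rule sum.cong[OF refl])
    fix c assume c: "c \<in> {..<K}"
    \<comment> \<open>\<open>u ^ i * X ^ j\<close> has order at least \<open>i + j\<close>\<close>
    have z: "(u ^ i * fps_X ^ j) $ c = 0" if "c < i + j" for i j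
      using that startsby_zero_power_prefix[OF u0, of i]
      by (simp add: fps_X_power_mult_right_nth)
    have "(\<Sum>i<K. \<Sum>j<K. F $ i $ j * (u ^ i * fps_X ^ j) $ c)
        = (\<Sum>i\<le>c. \<Sum>j<K. F $ i $ j * (u ^ i * fps_X ^ j) $ c)"
      using c z by (intro sum.mono_neutral_right) (auto intro!: sum.neutral)
    also have "\<dots> = (\<Sum>i\<le>c. \<Sum>j\<le>c. F $ i $ j * (u ^ i * fps_X ^ j) $ c)"
      using c z by (intro sum.cong refl sum.mono_neutral_right) auto
    finally show "(\<Sum>i<K. \<Sum>j<K. F $ i $ j * (u ^ i * fps_X ^ j) $ c) * a ^ c
        = (\<Sum>i\<le>c. \<Sum>j\<le>c. F $ i $ j * (u ^ i * fps_X ^ j) $ c) * a ^ c" by simp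
  qed
  also have "\<dots> = partial_sum1 (subst2_1 F u fps_X) a K"
    by (simp only: partial_sum1_def subst2_1_def fps_nth_Abs_fps)
  finally show ?thesis .
qed

lemma eval1_subst2_1_X:
  assumes a: "(\<p> :: 'p::nontriv_card padic) dvd a" and u0: "u $ 0 = 0"
  shows "eval1 (subst2_1 F u fps_X) a = eval2 F (eval1 u a) a"
proof (rule eval1_eqI)
  fix K
  define U where "U = eval1 u a"
  define S where "S = partial_sum1 u a K"
  have "\<p> dvd U" unfolding U_def using eval1_p_dvd[OF a u0] .
  then have "\<p> ^ K dvd eval2 F U a - partial_sum2 F U a K" by (rule eval2_approx[OF _ a])
  moreover have "\<p> ^ K dvd partial_sum2 F U a K - (\<Sum>i<K. \<Sum>j<K. F $ i $ j * S ^ i * a ^ j)"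
    unfolding partial_sum2_def U_def S_def using eval1_approx[OF a]
    by (intro dvd_diff_sum_cong dvd_diff_mult_cong dvd_diff_power_cong) simp_all
  moreover have "\<p> ^ K dvd (\<Sum>i<K. \<Sum>j<K. F $ i $ j * S ^ i * a ^ j)
     - (\<Sum>i<K. \<Sum>j<K. F $ i $ j * partial_sum1 (u ^ i * fps_X ^ j) a K)"
  proof (intro dvd_diff_sum_cong)
    fix i j
    have "\<p> ^ K dvd S ^ i * a ^ j - partial_sum1 (u ^ i) a K * partial_sum1 (fps_X ^ j) a K"
      using partial_sum1_power[OF a, of K u i] partial_sum1_X_power[OF a, of K j]
      by (intro dvd_diff_mult_cong) (simp_all add: S_def dvd_diff_commute)
    then have "\<p> ^ K dvd S ^ i * a ^ j - partial_sum1 (u ^ i * fps_X ^ j) a K"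
      using dvd_diff_commute[OF partial_sum1_mult[OF a]] by (rule dvd_diff_trans)
    then have "\<p> ^ K dvd F $ i $ j * (S ^ i * a ^ j) - F $ i $ j * partial_sum1 (u ^ i * fps_X ^ j) a K"
      by (intro dvd_diff_mult_cong) simp_all
    then show "\<p> ^ K dvd F $ i $ j * S ^ i * a ^ j - F $ i $ j * partial_sum1 (u ^ i * fps_X ^ j) a K"
      by (simp only: mult.assoc)
  qed
  ultimately show "\<p> ^ K dvd eval2 F (eval1 u a) a - partial_sum1 (subst2_1 F u fps_X) a K"
    unfolding U_def partial_sum1_subst2_1_X[OF u0, symmetric] by (blast intro: dvd_diff_trans)
qed

lemma eval1_fps_X: "(\<p> :: 'p::nontriv_card padic) dvd b \<Longrightarrow> eval1 fps_X b = b"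
  by (rule eval1_eqI) (use partial_sum1_X_power[of b _ 1] in \<open>simp add: dvd_diff_commute\<close>)

lemma eval2_fps_X: "(\<p> :: 'p::nontriv_card padic) dvd a \<Longrightarrow> eval2 fps_X a b = a"
proof (rule eval2_eqI)
  fix K
  assume "\<p> dvd a"
  show "\<p> ^ K dvd a - partial_sum2 fps_X a b K"
  proof (cases "K \<le> 1")
    case True
    then have "partial_sum2 fps_X a b K = 0" by (auto simp: partial_sum2_def le_Suc_eq)
    then show ?thesis using True p_power_dvd_power[OF \<open>\<p> dvd a\<close>, of K 1] by simp
  next
    case False
    then have K: "K = Suc (Suc (K - 2))" by simp
    have "partial_sum2 fps_X a b K = a"
      by (subst K, simp add: partial_sum2_def sum.lessThan_Suc_shift del: sum.lessThan_Suc)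
    then show ?thesis by simp
  qed
qed

lemma eval2_fps_const:
  "(\<p> :: 'p::nontriv_card padic) dvd b \<Longrightarrow> eval2 (fps_const g) a b = eval1 g b"
proof (rule eval2_eqI)
  fix K
  assume "\<p> dvd b"
  have "partial_sum2 (fps_const g) a b K = (if K = 0 then 0 else partial_sum1 g b K)"
  proof (cases K)
    case (Suc K')
    have "partial_sum2 (fps_const g) a b (Suc K') = (\<Sum>j<Suc K'. g $ j * b ^ j)
        + (\<Sum>i<K'. \<Sum>j<Suc K'. fps_const g $ Suc i $ j * a ^ Suc i * b ^ j)"
      unfolding partial_sum2_def by (subst sum.lessThan_Suc_shift) simp
    then show ?thesis using Suc by (simp add: partial_sum1_def)
  qed (simp add: partial_sum2_def)
  then show "\<p> ^ K dvd eval1 g b - partial_sum2 (fps_const g) a b K"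
    using eval1_approx[OF \<open>\<p> dvd b\<close>] by simp
qed

lemma eval2_diff:
  assumes "(\<p> :: 'p::nontriv_card padic) dvd a" "\<p> dvd b"
  shows "eval2 (\<phi> - \<psi>) a b = eval2 \<phi> a b - eval2 \<psi> a b"
proof (rule eval2_eqI)
  fix K
  have "partial_sum2 (\<phi> - \<psi>) a b K = partial_sum2 \<phi> a b K - partial_sum2 \<psi> a b K"
    by (simp add: partial_sum2_def left_diff_distrib sum_subtractf)
  then have eq: "eval2 \<phi> a b - eval2 \<psi> a b - partial_sum2 (\<phi> - \<psi>) a b K
      = (eval2 \<phi> a b - partial_sum2 \<phi> a b K) - (eval2 \<psi> a b - partial_sum2 \<psi> a b K)"
    by (simp add: algebra_simps)
  show "\<p> ^ K dvd eval2 \<phi> a b - eval2 \<psi> a b - partial_sum2 (\<phi> - \<psi>) a b K"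
    unfolding eq by (intro dvd_diff eval2_approx assms)
qed

lemma eval1_fps_const_mult:
  "(\<p> :: 'p::nontriv_card padic) dvd b \<Longrightarrow> eval1 (fps_const c * g) b = c * eval1 g b"
proof (rule eval1_eqI)
  fix K
  assume "\<p> dvd b"
  have "partial_sum1 (fps_const c * g) b K = c * partial_sum1 g b K"
    by (simp add: partial_sum1_def sum_distrib_left mult.assoc)
  then have "c * eval1 g b - partial_sum1 (fps_const c * g) b K = c * (eval1 g b - partial_sum1 g b K)"
    by (simp add: right_diff_distrib)
  then show "\<p> ^ K dvd c * eval1 g b - partial_sum1 (fps_const c * g) b K"
    using eval1_approx[OF \<open>\<p> dvd b\<close>, of K g] by simp
qed

section \<open>Formal group laws\<close>

definition subst_YZ_0 :: "'a::comm_ring_1 fps fps fps \<Rightarrow> 'a fps" where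
  "subst_YZ_0 T = Abs_fps (\<lambda>a. T $ a $ 0 $ 0)"

lemma subst_YZ_0_nth: "subst_YZ_0 T $ a = T $ a $ 0 $ 0"
  by (simp add: subst_YZ_0_def)

lemma subst_YZ_0_mult: "subst_YZ_0 (S * T) = subst_YZ_0 S * subst_YZ_0 T"
  by (rule fps_ext) (simp add: subst_YZ_0_nth fps_mult_nth fps_sum_nth)

lemma subst_YZ_0_power: "subst_YZ_0 (T ^ n) = subst_YZ_0 T ^ n"
proof (induction n)
  case 0
  show ?case by (rule fps_ext) (simp add: subst_YZ_0_nth)
qed (simp add: subst_YZ_0_mult)

lemma subst_YZ_0_X3: "subst_YZ_0 (X3 :: 'a::comm_ring_1 fps fps fps) = fps_X"
  by (rule fps_ext) (simp add: subst_YZ_0_nth X3_def)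

lemma subst_YZ_0_Y3: "subst_YZ_0 (Y3 :: 'a::comm_ring_1 fps fps fps) = 0"
  by (rule fps_ext) (simp add: subst_YZ_0_nth Y3_def)

lemma subst_YZ_0_Z3: "subst_YZ_0 (Z3 :: 'a::comm_ring_1 fps fps fps) = 0"
  by (rule fps_ext) (simp add: subst_YZ_0_nth Z3_def)

lemma subst_YZ_0_subst2_3:
  assumes "subst_YZ_0 V = 0"
  shows "subst_YZ_0 (subst2_3 F U V) = Abs_fps (\<lambda>i. F $ i $ 0) oo subst_YZ_0 U"
proof (rule fps_ext)
  fix a
  have "subst_YZ_0 (subst2_3 F U V) $ a
      = (\<Sum>i\<le>a. \<Sum>j\<le>a. F $ i $ j * (subst_YZ_0 U ^ i * subst_YZ_0 V ^ j) $ a)"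
    by (simp add: subst_YZ_0_nth subst2_3_def subst_YZ_0_power[symmetric] subst_YZ_0_mult[symmetric])
  also have "\<dots> = (\<Sum>i\<le>a. F $ i $ 0 * (subst_YZ_0 U ^ i) $ a)"
    by (simp add: assms sum.atMost_shift power_0_left del: sum.atMost_Suc)
  finally show "subst_YZ_0 (subst2_3 F U V) $ a = (Abs_fps (\<lambda>i. F $ i $ 0) oo subst_YZ_0 U) $ a"
    by (simp add: fps_compose_nth atLeast0AtMost)
qed

lemma fps_compose_idempotent_eq_X:
  fixes g :: "'a::comm_ring_1 fps"
  assumes g0: "g $ 0 = 0" and g1: "g $ 1 = 1" and idem: "g oo g = g"
  shows "g = fps_X"
proof (rule fps_ext)
  fix n
  show "g $ n = fps_X $ n"
  proof (induction n rule: less_induct)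
    case (less a)
    show ?case
    proof (cases "a < 2")
      case True
      then have "a = 0 \<or> a = 1" by auto
      then show ?thesis using g0 g1 by auto
    next
      case False
      \<comment> \<open>the middle coefficients vanish by induction, leaving
        \<open>g $ 1 * g $ a + g $ a * g $ 1 ^ a\<close>\<close>
      have "(g oo g) $ a = (\<Sum>i\<in>{1, a}. g $ i * (g ^ i) $ a)"
        unfolding fps_compose_nth
      proof (rule sum.mono_neutral_right)
        show "\<forall>i\<in>{0..a} - {1, a}. g $ i * (g ^ i) $ a = 0"
          using less.IH g0 by auto
      qed (use False in auto)
      also have "\<dots> = g $ a + g $ a"
        using False g1 by (simp add: startsby_zero_power_nth_same[OF g0])
      finally have "g $ a = 0" using idem by simp
      then show ?thesis using False by simp
    qed
  qed
qed

lemma formal_group_law_X_0: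
  fixes F :: "'a::comm_ring_1 fps fps"
  assumes fgl: "formal_group_law F"
  shows "F $ i $ 0 = (if i = 1 then 1 else 0)"
proof -
  define g where "g = Abs_fps (\<lambda>i. F $ i $ 0)"
  have g0: "g $ 0 = 0" and g1: "g $ 1 = 1" using fgl by (simp_all add: g_def formal_group_law_def)
  have XY: "subst_YZ_0 (subst2_3 F X3 Y3) = g"
    by (simp add: subst_YZ_0_subst2_3 subst_YZ_0_X3 subst_YZ_0_Y3 g_def)
  have YZ: "subst_YZ_0 (subst2_3 F Y3 Z3) = 0"
    using g0 by (simp add: subst_YZ_0_subst2_3 subst_YZ_0_Y3 subst_YZ_0_Z3 flip: g_def)
  have "subst2_3 F (subst2_3 F X3 Y3) Z3 = subst2_3 F X3 (subst2_3 F Y3 Z3)"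
    using fgl by (simp add: formal_group_law_def)
  then have "g oo g = g"
    using subst_YZ_0_subst2_3[OF subst_YZ_0_Z3, of F "subst2_3 F X3 Y3"]
      subst_YZ_0_subst2_3[OF YZ, of F X3]
    by (simp add: XY subst_YZ_0_X3 flip: g_def)
  then have "g = fps_X" using g0 g1 by (rule fps_compose_idempotent_eq_X[rotated 2])
  then show ?thesis by (metis fps_X_nth fps_nth_Abs_fps g_def)
qed

lemma fgl_mult_nth_0: "F $ 0 $ 0 = 0 \<Longrightarrow> fgl_mult F n $ 0 = 0"
  by (cases n) (simp_all add: subst2_1_def)

section \<open>The orbit of a point under translation by the group law\<close>

lemma fgl_term_diff_dvd:
  fixes F :: "'a::comm_ring_1 fps fps"
  assumes fgl: "formal_group_law F" and "m dvd a" "m dvd b" "m dvd c"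
    and ij: "(i, j) \<notin> {(1, 0), (1, 1)}"
  shows "m * c * (a - b) dvd F $ i $ j * (a ^ i - b ^ i) * c ^ j"
proof -
  consider "i = 0" | "i \<ge> 2" "j = 0" | "i = 1" "j \<ge> 2" | "i \<ge> 2" "j \<ge> 1"
    using ij by fastforce
  then show ?thesis
  proof cases
    case 2
    then show ?thesis using formal_group_law_X_0[OF fgl, of i] by simp
  next
    case 3
    then obtain j' where "j = Suc (Suc j')" by (metis add_2_eq_Suc le_Suc_ex)
    moreover obtain c' where "c = m * c'" using \<open>m dvd c\<close> by blast
    ultimately have "F $ i $ j * (a ^ i - b ^ i) * c ^ j = m * c * (a - b) * (F $ 1 $ j * c' * c ^ j')"
      using 3 by (simp add: algebra_simps)
    then show ?thesis by simp
  next
    case 4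
    \<comment> \<open>\<open>a ^ i - b ^ i = (a - b) * \<Sum>k<i. b ^ (i - Suc k) * a ^ k\<close>, and each summand is
      divisible by \<open>m\<close> as \<open>i \<ge> 2\<close>\<close>
    have "m dvd b ^ (i - Suc k) * a ^ k" if "k < i" for k
    proof (cases k)
      case 0
      then have "b dvd b ^ (i - Suc k)" using 4 by simp
      then show ?thesis using \<open>m dvd b\<close> by (meson dvd_mult2 dvd_trans)
    qed (use \<open>m dvd a\<close> in simp)
    then obtain S where "(\<Sum>k<i. b ^ (i - Suc k) * a ^ k) = m * S" by (meson dvd_sum lessThan_iff dvdE)
    moreover obtain j' where "j = Suc j'" using 4 by (cases j) auto
    ultimately have "F $ i $ j * (a ^ i - b ^ i) * c ^ j = m * c * (a - b) * (F $ i $ j * S * c ^ j')"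
      by (simp add: power_diff_sumr2 algebra_simps)
    then show ?thesis by simp
  qed simp
qed

lemma (in prime_card) fgl_eval_diff:
  fixes F :: "'p padic fps fps"
  assumes fgl: "formal_group_law F" and a: "\<p> dvd a" and b: "\<p> dvd b" and c: "\<p> dvd c"
  shows "\<exists>r. eval2 F a c - eval2 F b c = (a - b) * (1 + F $ 1 $ 1 * c) + \<p> * c * (a - b) * r"
proof -
  define d where "d = \<p> * c * (a - b)"
  define s where "s = eval2 F a c - eval2 F b c - (a - b) * (1 + F $ 1 $ 1 * c)"
  define t where "t = (\<lambda>(i, j). F $ i $ j * (a ^ i - b ^ i) * c ^ j)"
  have "\<exists>r. \<p> ^ K dvd s - d * r" for K
  proof -
    define K' where "K' = K + 2"
    define I where "I = {..<K'} \<times> {..<K'}"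
    have "partial_sum2 F a c K' - partial_sum2 F b c K' = (\<Sum>i<K'. \<Sum>j<K'. t (i, j))"
      unfolding partial_sum2_def sum_subtractf[symmetric] by (simp add: t_def algebra_simps)
    also have "\<dots> = sum t I" by (simp add: I_def sum.cartesian_product)
    also have "\<dots> = sum t (I - {(1, 0), (1, 1)}) + sum t {(1, 0), (1, 1)}"
      by (rule sum.subset_diff) (auto simp: I_def K'_def)
    also have "sum t {(1, 0), (1, 1)} = (a - b) * (1 + F $ 1 $ 1 * c)"
      using formal_group_law_X_0[OF fgl, of 1] by (simp add: t_def algebra_simps)
    finally have "partial_sum2 F a c K' - partial_sum2 F b c K'
        = sum t (I - {(1, 0), (1, 1)}) + (a - b) * (1 + F $ 1 $ 1 * c)" .
    moreover have "d dvd sum t (I - {(1, 0), (1, 1)})"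
      using fgl_term_diff_dvd[OF fgl a b c] by (intro dvd_sum) (auto simp: d_def t_def)
    then obtain r where "sum t (I - {(1, 0), (1, 1)}) = d * r" by blast
    ultimately have "s - d * r = (eval2 F a c - partial_sum2 F a c K')
        - (eval2 F b c - partial_sum2 F b c K')"
      by (simp add: s_def algebra_simps)
    moreover have "\<p> ^ K dvd \<p> ^ K'" by (simp add: K'_def le_imp_power_dvd)
    ultimately have "\<p> ^ K dvd s - d * r"
      using dvd_diff[OF eval2_approx[OF a c] eval2_approx[OF b c]] by (metis dvd_trans)
    then show ?thesis by blast
  qed
  then obtain r where "s = d * r" by (meson dvd_if_approx_by_multiples dvdE)
  then show ?thesis by (auto simp: s_def d_def algebra_simps)
qed

lemma power_card_1_plus_mult:
  assumes "(\<p> :: 'p::nontriv_card padic) dvd \<alpha>"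
  shows "\<exists>s. (1 + x * \<alpha>) ^ CARD('p) = 1 + \<p> * \<alpha> * s"
proof -
  obtain \<alpha>' where \<alpha>': "\<alpha> = \<p> * \<alpha>'" using assms by blast
  have "\<alpha> dvd (1 + x * \<alpha>) ^ k - 1 ^ k" for k by (rule dvd_diff_power_cong) simp
  then have "\<alpha> dvd (\<Sum>k<CARD('p). (1 + x * \<alpha>) ^ k - 1)" by (intro dvd_sum) simp
  then obtain t where "(\<Sum>k<CARD('p). (1 + x * \<alpha>) ^ k - 1) = \<alpha> * t" by blast
  then have "(\<Sum>k<CARD('p). (1 + x * \<alpha>) ^ k) = \<p> + \<alpha> * t"
    by (simp add: sum_subtractf algebra_simps)
  then have "(1 + x * \<alpha>) ^ CARD('p) - 1 = x * \<alpha> * (\<p> + \<alpha> * t)"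
    by (simp add: power_diff_1_eq)
  also have "\<dots> = \<p> * \<alpha> * (x + x * \<alpha>' * t)" by (simp add: \<alpha>' algebra_simps)
  finally show ?thesis by (metis diff_eq_eq add.commute)
qed

lemma fgl_mult_at_0: "fgl_mult_at F 0 a = 0"
  unfolding fgl_mult_at_def by (rule eval1_eqI) (simp add: partial_sum1_def)

locale fgl_orbit = prime_card ty for ty :: "'p::nontriv_card itself" +
  fixes F :: "'p padic fps fps" and \<alpha> :: "'p padic"
  assumes fgl: "formal_group_law F" and p_dvd_\<alpha>: "\<p> dvd \<alpha>"
begin

definition step :: "'p padic \<Rightarrow> 'p padic" where "step y = eval2 F y \<alpha>"

lemma F_0_0: "F $ 0 $ 0 = 0"
  using fgl by (simp add: formal_group_law_def)

lemma fgl_mult_at_Suc: "fgl_mult_at F (Suc n) \<alpha> = step (fgl_mult_at F n \<alpha>)"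
  using eval1_subst2_1_X[OF p_dvd_\<alpha> fgl_mult_nth_0[OF F_0_0]] by (simp add: fgl_mult_at_def step_def)

lemma p_dvd_step_iter: "\<p> dvd y \<Longrightarrow> \<p> dvd (step ^^ n) y"
  by (induction n) (simp_all add: step_def eval2_p_dvd p_dvd_\<alpha> F_0_0)

lemma p_dvd_fgl_mult_at: "\<p> dvd fgl_mult_at F n \<alpha>"
  by (induction n) (simp_all add: fgl_mult_at_0 fgl_mult_at_Suc p_dvd_step_iter[of _ 1, simplified])

lemma fgl_mult_at_add: "fgl_mult_at F (n + k) \<alpha> = (step ^^ n) (fgl_mult_at F k \<alpha>)"
  by (induction n) (simp_all add: fgl_mult_at_Suc)

lemma step_iter_diff:
  assumes a: "\<p> dvd a" and b: "\<p> dvd b"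
  shows "\<exists>r. (step ^^ n) a - (step ^^ n) b = (a - b) * ((1 + F $ 1 $ 1 * \<alpha>) ^ n + \<p> * \<alpha> * r)"
proof (induction n)
  case 0
  show ?case by (intro exI[of _ 0]) simp
next
  case (Suc n)
  define D where "D = 1 + F $ 1 $ 1 * \<alpha>"
  obtain r where r: "(step ^^ n) a - (step ^^ n) b = (a - b) * (D ^ n + \<p> * \<alpha> * r)"
    using Suc.IH D_def by blast
  obtain r1 where r1: "step ((step ^^ n) a) - step ((step ^^ n) b)
      = ((step ^^ n) a - (step ^^ n) b) * D + \<p> * \<alpha> * ((step ^^ n) a - (step ^^ n) b) * r1"
    using fgl_eval_diff[OF fgl p_dvd_step_iter[OF a] p_dvd_step_iter[OF b] p_dvd_\<alpha>]
    unfolding step_def D_def by blast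
  have "(step ^^ Suc n) a - (step ^^ Suc n) b
      = (a - b) * (D ^ Suc n + \<p> * \<alpha> * (r * D + D ^ n * r1 + \<p> * \<alpha> * r * r1))"
    using r1 unfolding r by (simp add: algebra_simps)
  then show ?case unfolding D_def by blast
qed

lemma fgl_mult_at_quasi_additive:
  "\<exists>r. fgl_mult_at F (CARD('p) * (n + k)) \<alpha> - fgl_mult_at F (CARD('p) * n) \<alpha>
     = fgl_mult_at F (CARD('p) * k) \<alpha> * (1 + \<p> ^ 2 * r)"
proof -
  define p where "p = CARD('p)"
  obtain r where r: "(step ^^ (p * n)) (fgl_mult_at F (p * k) \<alpha>) - (step ^^ (p * n)) 0
      = fgl_mult_at F (p * k) \<alpha> * ((1 + F $ 1 $ 1 * \<alpha>) ^ (p * n) + \<p> * \<alpha> * r)"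
    using step_iter_diff[OF p_dvd_fgl_mult_at dvd_0_right] by fastforce
  obtain s where "(1 + F $ 1 $ 1 * \<alpha>) ^ p = 1 + \<p> * \<alpha> * s"
    using power_card_1_plus_mult[OF p_dvd_\<alpha>] p_def by blast
  moreover have "\<p> * \<alpha> dvd (1 + \<p> * \<alpha> * s) ^ n - 1 ^ n"
    by (rule dvd_diff_power_cong) simp
  then obtain s' where "(1 + \<p> * \<alpha> * s) ^ n - 1 = \<p> * \<alpha> * s'" by (auto simp: dvd_def)
  then have "(1 + \<p> * \<alpha> * s) ^ n = 1 + \<p> * \<alpha> * s'" by (metis diff_eq_eq add.commute)
  ultimately have "(1 + F $ 1 $ 1 * \<alpha>) ^ (p * n) = 1 + \<p> * \<alpha> * s'"
    by (simp add: power_mult)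
  moreover have "fgl_mult_at F (p * (n + k)) \<alpha> = (step ^^ (p * n)) (fgl_mult_at F (p * k) \<alpha>)"
    using fgl_mult_at_add[of "p * n" "p * k"] by (simp add: algebra_simps)
  moreover have "fgl_mult_at F (p * n) \<alpha> = (step ^^ (p * n)) 0"
    using fgl_mult_at_add[of "p * n" 0] by (simp add: fgl_mult_at_0)
  moreover obtain \<alpha>' where "\<alpha> = \<p> * \<alpha>'" using p_dvd_\<alpha> by blast
  ultimately have "fgl_mult_at F (p * (n + k)) \<alpha> - fgl_mult_at F (p * n) \<alpha>
      = fgl_mult_at F (p * k) \<alpha> * (1 + \<p> ^ 2 * (\<alpha>' * (s' + r)))"
    using r by (simp add: algebra_simps power2_eq_square)
  then show ?thesis unfolding p_def by blast
qed

end

section \<open>Sequences that are additive up to units congruent to 1 mod p^2\<close>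

locale quasi_additive_seq = prime_card ty for ty :: "'p::nontriv_card itself" +
  fixes z :: "nat \<Rightarrow> 'p padic"
  assumes zero: "z 0 = 0"
    and p_dvd: "\<p> dvd z n"
    and add: "\<exists>r. z (n + k) - z n = z k * (1 + \<p> ^ 2 * r)"
begin

lemma mult: "\<exists>r. z (j * k) = z k * (of_nat j + \<p> ^ 2 * r)"
proof (induction j)
  case 0
  show ?case using zero by (intro exI[of _ 0]) simp
next
  case (Suc j)
  then obtain r where r: "z (j * k) = z k * (of_nat j + \<p> ^ 2 * r)" by blast
  obtain r1 where "z (j * k + k) - z (j * k) = z k * (1 + \<p> ^ 2 * r1)" using add by blast
  then have "z (Suc j * k) = z k * (of_nat (Suc j) + \<p> ^ 2 * (r + r1))"
    unfolding r by (simp add: algebra_simps)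
  then show ?case by blast
qed

lemma not_p_dvd_1_plus_p2_mult: "\<not> \<p> dvd 1 + \<p> ^ 2 * (r :: 'p padic)"
  using not_p_dvd_1_plus_p_mult[of "\<p> * r"] by (simp add: power2_eq_square mult.assoc)

lemma eq_0_if_one_eq_0: "z 1 = 0 \<Longrightarrow> z n = 0"
  using mult[of n 1] by auto

lemma card_mult: "\<exists>r. z (CARD('p) * k) = z k * \<p> * (1 + \<p> * r)"
proof -
  obtain r where "z (CARD('p) * k) = z k * (\<p> + \<p> ^ 2 * r)" using mult by blast
  then have "z (CARD('p) * k) = z k * \<p> * (1 + \<p> * r)" by (simp add: algebra_simps power2_eq_square)
  then show ?thesis by blast
qed

context
  fixes E u
  assumes one_eq: "z 1 = \<p> ^ E * u" and not_p_dvd_u: "\<not> \<p> dvd u"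
begin

lemma not_p_power_dvd: "0 < k \<Longrightarrow> k < CARD('p) ^ M \<Longrightarrow> \<not> \<p> ^ (E + M) dvd z k"
proof (induction M arbitrary: k)
  case (Suc M)
  show ?case
  proof (cases "CARD('p) dvd k")
    case True
    then obtain k' where k: "k = CARD('p) * k'" by blast
    have k': "0 < k'" "k' < CARD('p) ^ M" using Suc.prems k by auto
    obtain r where r: "z k = \<p> * (z k' * (1 + \<p> * r))" using card_mult k by (auto simp: ac_simps)
    show ?thesis
    proof
      assume "\<p> ^ (E + Suc M) dvd z k"
      then obtain c where "z k = \<p> ^ (E + Suc M) * c" by blast
      then have "\<p> * (z k' * (1 + \<p> * r)) = \<p> * (\<p> ^ (E + M) * c)" using r by (simp add: ac_simps)
      then have "z k' * (1 + \<p> * r) = \<p> ^ (E + M) * c"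
        by (rule padic_mult_left_cancel[rotated]) (use p_power_neq_0[of 1] in simp)
      then have "\<p> ^ (E + M) dvd z k' * (1 + \<p> * r)" by simp
      then have "\<p> ^ (E + M) dvd z k'"
        using dvd_mult_cancel_not_p_dvd not_p_dvd_1_plus_p_mult by blast
      then show False using Suc.IH k' by blast
    qed
  next
    case False
    obtain r where "z (k * 1) = z 1 * (of_nat k + \<p> ^ 2 * r)" using mult by blast
    then have zk: "z k = \<p> ^ E * (u * (of_nat k + \<p> * (\<p> * r)))"
      using one_eq by (simp add: power2_eq_square ac_simps)
    have "\<not> \<p> dvd of_nat k + \<p> * (\<p> * r)"
      using False p_dvd_of_nat_iff[where 'p='p, of k] by (metis dvd_add_left_iff dvd_triv_left)
    then have "\<not> \<p> dvd u * (of_nat k + \<p> * (\<p> * r))" using not_p_dvd_u p_dvd_multD by blast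
    then show ?thesis using p_power_dvd_p_power_mult_unit[of "E + Suc M"] zk by fastforce
  qed
qed simp

lemma card_power_eq: "\<exists>v. z (CARD('p) ^ m) = \<p> ^ (E + m) * v"
proof (induction m)
  case 0
  show ?case using one_eq by auto
next
  case (Suc m)
  then obtain v where v: "z (CARD('p) ^ m) = \<p> ^ (E + m) * v" by blast
  obtain r where "z (CARD('p) * CARD('p) ^ m) = z (CARD('p) ^ m) * \<p> * (1 + \<p> * r)"
    using card_mult by blast
  then have "z (CARD('p) ^ Suc m) = \<p> ^ (E + Suc m) * (v * (1 + \<p> * r))"
    using v by (simp add: algebra_simps)
  then show ?case by blast
qed

lemma p_power_dvd_shift: "\<p> ^ (E + m) dvd z (n + CARD('p) ^ m * j) - z n"
proof -
  obtain r where r: "z (n + CARD('p) ^ m * j) - z n = z (CARD('p) ^ m * j) * (1 + \<p> ^ 2 * r)"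
    using add by blast
  obtain r' where "z (j * CARD('p) ^ m) = z (CARD('p) ^ m) * (of_nat j + \<p> ^ 2 * r')"
    using mult by blast
  moreover obtain v where "z (CARD('p) ^ m) = \<p> ^ (E + m) * v" using card_power_eq by blast
  ultimately show ?thesis unfolding r by (simp add: mult.commute[of j] mult.assoc)
qed

lemma not_p_power_dvd_diff:
  assumes "n < n'" "n' - n < CARD('p) ^ m"
  shows "\<not> \<p> ^ (E + m) dvd z n' - z n"
proof
  define k where "k = n' - n"
  obtain r where r: "z (n + k) - z n = z k * (1 + \<p> ^ 2 * r)" using add by blast
  assume "\<p> ^ (E + m) dvd z n' - z n"
  then have "\<p> ^ (E + m) dvd z k * (1 + \<p> ^ 2 * r)" using assms r by (simp add: k_def)
  then have "\<p> ^ (E + m) dvd z k" using dvd_mult_cancel_not_p_dvd not_p_dvd_1_plus_p2_mult by blast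
  then show False using not_p_power_dvd[of k m] assms by (simp add: k_def)
qed

lemma inj: "inj z"
proof -
  have "z n \<noteq> z n'" if "n < n'" for n n'
  proof -
    have "n' - n < 2 ^ (n' - n)" by (rule less_exp)
    also have "(2::nat) ^ (n' - n) \<le> CARD('p) ^ (n' - n)"
      using card_gt1[where 'a='p] by (intro power_mono) auto
    finally show ?thesis using not_p_power_dvd_diff[OF that, of "n' - n"] by auto
  qed
  then show ?thesis by (metis injI linorder_neqE_nat)
qed

text \<open>Pigeonhole: \<open>z\<close> maps \<open>{..<p^m}\<close> injectively, hence onto, the residues of \<open>p^E Z_p\<close>
  modulo \<open>p^(E+m)\<close>.\<close>
lemma digits_image:
  "(\<lambda>n. digits (z n) (E + m)) ` {..<CARD('p) ^ m}
    = (\<lambda>s. int CARD('p) ^ E * s) ` {0..<int CARD('p) ^ m}"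
proof (rule card_subset_eq)
  show "finite ((\<lambda>s. int CARD('p) ^ E * s) ` {0..<int CARD('p) ^ m})" by simp
  have "\<p> ^ E dvd z n" for n
  proof -
    obtain c where "z (n * 1) = z 1 * (of_nat n + \<p> ^ 2 * c)" using mult by blast
    then show ?thesis using one_eq by simp
  qed
  then show "(\<lambda>n. digits (z n) (E + m)) ` {..<CARD('p) ^ m}
      \<subseteq> (\<lambda>s. int CARD('p) ^ E * s) ` {0..<int CARD('p) ^ m}"
    using digits_mem_multiples by blast
  have "inj_on (\<lambda>n. digits (z n) (E + m)) {..<CARD('p) ^ m}"
  proof (rule linorder_inj_onI)
    fix n n' assume "n < n'" "n' \<in> {..<CARD('p) ^ m}"
    then show "digits (z n) (E + m) \<noteq> digits (z n') (E + m)"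
      using not_p_power_dvd_diff[of n n' m] p_power_dvd_diff_iff_digits_eq by fastforce
  qed auto
  moreover have "inj_on (\<lambda>s. int CARD('p) ^ E * s) {0..<int CARD('p) ^ m}"
    by (intro inj_onI) simp
  ultimately show "card ((\<lambda>n. digits (z n) (E + m)) ` {..<CARD('p) ^ m})
      = card ((\<lambda>s. int CARD('p) ^ E * s) ` {0..<int CARD('p) ^ m})"
    by (simp add: card_image nat_power_eq)
qed

lemma dense:
  assumes "\<p> ^ E dvd t"
  shows "\<exists>n\<ge>M. \<p> ^ V dvd z n - t"
proof -
  define m where "m = max V E - E"
  have "digits t (E + m) \<in> (\<lambda>n. digits (z n) (E + m)) ` {..<CARD('p) ^ m}"
    unfolding digits_image by (rule digits_mem_multiples[OF assms])
  then obtain n where "n < CARD('p) ^ m" "digits (z n) (E + m) = digits t (E + m)" by auto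
  then have "\<p> ^ (E + m) dvd z n - t" using p_power_dvd_diff_iff_digits_eq by blast
  then have "\<p> ^ (E + m) dvd z (n + CARD('p) ^ m * M) - t"
    using p_power_dvd_shift by (blast intro: dvd_diff_trans)
  moreover have "\<p> ^ V dvd \<p> ^ (E + m)" by (simp add: m_def le_imp_power_dvd)
  moreover have "1 * M \<le> CARD('p) ^ m * M" using card_gt1[where 'a='p] by (intro mult_le_mono1) simp
  then have "M \<le> n + CARD('p) ^ m * M" by linarith
  ultimately show ?thesis by (meson dvd_trans)
qed

end

end

section \<open>Newton interpolation at p-adic nodes\<close>

definition newton_poly :: "(nat \<Rightarrow> 'a::comm_ring_1) \<Rightarrow> nat \<Rightarrow> 'a poly" where
  "newton_poly b k = (\<Prod>j<k. [:- b j, 1:])"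

lemma newton_poly_Suc: "newton_poly b (Suc k) = newton_poly b k * [:- b k, 1:]"
  by (simp add: newton_poly_def)

lemma poly_newton_poly: "poly (newton_poly b k) x = (\<Prod>j<k. x - b j)"
  by (simp add: newton_poly_def poly_prod)

lemma poly_newton_poly_node: "j < k \<Longrightarrow> poly (newton_poly b k) (b j) = 0"
  unfolding poly_newton_poly by (rule prod_zero) auto

lemma coeff_newton_poly_dvd:
  fixes b :: "nat \<Rightarrow> 'a::comm_ring_1"
  assumes b: "\<And>j. m dvd b j"
  shows "m ^ (k - i) dvd coeff (newton_poly b k) i"
proof (induction k arbitrary: i)
  case 0
  then show ?case by (cases i) (simp_all add: newton_poly_def)
next
  case (Suc k)
  have "coeff (newton_poly b (Suc k)) i
      = - b k * coeff (newton_poly b k) i + (if i = 0 then 0 else coeff (newton_poly b k) (i - 1))"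
    by (cases i) (simp_all add: newton_poly_Suc coeff_pCons algebra_simps)
  moreover have "m ^ Suc (k - i) dvd b k * coeff (newton_poly b k) i"
    using mult_dvd_mono[OF b[of k] Suc.IH[of i]] by simp
  then have "m ^ (Suc k - i) dvd b k * coeff (newton_poly b k) i"
    using le_imp_power_dvd[of "Suc k - i" "Suc (k - i)" m] by (auto intro: dvd_trans)
  moreover have "m ^ (Suc k - i) dvd (if i = 0 then 0 else coeff (newton_poly b k) (i - 1))"
    using Suc.IH[of "i - 1"] by (cases i) simp_all
  ultimately show ?case by simp
qed

lemma p_power_dvd_poly_diff_truncation:
  assumes "(\<p> :: 'p::nontriv_card padic) dvd b"
  shows "\<p> ^ K dvd poly P b - (\<Sum>j<K. coeff P j * b ^ j)"
proof -
  define D where "D = K + Suc (degree P)"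
  have "poly P b = (\<Sum>j<D. coeff P j * b ^ j)"
    unfolding poly_altdef by (rule sum.mono_neutral_left) (auto simp: D_def coeff_eq_0)
  also have "\<dots> = (\<Sum>j<K. coeff P j * b ^ j) + (\<Sum>j\<in>{..<D} - {..<K}. coeff P j * b ^ j)"
    by (subst sum.subset_diff[of "{..<K}"]) (auto simp: D_def)
  finally have "poly P b - (\<Sum>j<K. coeff P j * b ^ j) = (\<Sum>j\<in>{..<D} - {..<K}. coeff P j * b ^ j)"
    by simp
  also have "\<p> ^ K dvd \<dots>"
    using p_power_dvd_power[OF assms] by (intro dvd_sum) simp
  finally show ?thesis .
qed

lemma coeffwise_limit_exists:
  fixes G :: "nat \<Rightarrow> 'p::nontriv_card padic poly"
  assumes "\<And>L i. \<p> ^ (Suc L - i) dvd coeff (G (Suc L)) i - coeff (G L) i"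
  shows "\<exists>l. \<forall>K j L. K + j \<le> L \<longrightarrow> \<p> ^ K dvd l j - coeff (G L) j"
proof -
  have "\<exists>l. \<forall>K. \<p> ^ K dvd l - coeff (G (K + j)) j" for j
  proof (rule padic_limit_exists)
    fix K
    show "\<p> ^ K dvd coeff (G (Suc K + j)) j - coeff (G (K + j)) j"
      using assms[of "K + j" j] le_imp_power_dvd[of K "Suc (K + j) - j" "\<p>"]
      by (auto intro: dvd_trans)
  qed
  then obtain l where l: "\<And>j K. \<p> ^ K dvd l j - coeff (G (K + j)) j" by metis
  have "\<p> ^ K dvd l j - coeff (G L) j" if "K + j \<le> L" for K j L
  proof -
    have "\<p> ^ (L - j) dvd l j - coeff (G L) j"
      using l[where j=j and K="L - j"] that by simp
    moreover have "\<p> ^ K dvd \<p> ^ (L - j)" using that by (intro le_imp_power_dvd) simp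
    ultimately show ?thesis using dvd_trans by blast
  qed
  then show ?thesis by blast
qed

lemma eval1_coeffwise_limit:
  fixes G :: "nat \<Rightarrow> 'p::nontriv_card padic poly"
  assumes l: "\<And>K j L. K + j \<le> L \<Longrightarrow> \<p> ^ K dvd l j - coeff (G L) j"
    and b: "\<p> dvd b" and y: "\<And>L. k \<le> L \<Longrightarrow> poly (G L) b = y"
  shows "eval1 (Abs_fps l) b = y"
proof (rule eval1_eqI)
  fix K
  define L where "L = k + 2 * K"
  have "\<p> ^ K dvd (\<Sum>j<K. coeff (G L) j * b ^ j) - partial_sum1 (Abs_fps l) b K"
    unfolding partial_sum1_def
    using l[of K _ L] by (intro dvd_diff_sum_cong dvd_diff_mult_cong) (auto simp: L_def dvd_diff_commute)
  then show "\<p> ^ K dvd y - partial_sum1 (Abs_fps l) b K"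
    using p_power_dvd_poly_diff_truncation[OF b, of K "G L"] y[of L]
    by (auto simp: L_def intro: dvd_diff_trans)
qed

context prime_card
begin

lemma poly_newton_poly_neq_0:
  "(\<And>j. j < k \<Longrightarrow> x \<noteq> b j) \<Longrightarrow> poly (newton_poly b k) (x :: 'p padic) \<noteq> 0"
proof (induction k)
  case (Suc k)
  have "poly (newton_poly b (Suc k)) x = poly (newton_poly b k) x * (x - b k)"
    by (simp add: newton_poly_Suc algebra_simps)
  moreover have "poly (newton_poly b k) x \<noteq> 0" "x - b k \<noteq> 0" using Suc by simp_all
  ultimately show ?case using padic_no_zero_divisors by metis
qed (simp add: newton_poly_def)

text \<open>Adding a multiple of the Newton polynomial keeps the values at the earlier nodes; the required
  multiple exists because the (nonzero) value of that polynomial at the new node divides a power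
  of \<open>p\<close>.\<close>
lemma newton_step:
  fixes z b :: "nat \<Rightarrow> 'p padic"
  assumes nodes: "\<And>j. j < k \<Longrightarrow> b k \<noteq> b j"
    and dense: "\<And>t V M. \<p> ^ E dvd t \<Longrightarrow> \<exists>n\<ge>M. \<p> ^ V dvd z n - t"
  shows "\<exists>c n. M \<le> n \<and> z n = \<p> ^ E * poly (G + smult c (newton_poly b k)) (b k)"
proof -
  define d where "d = \<p> ^ E * poly (newton_poly b k) (b k)"
  have "d \<noteq> 0"
    unfolding d_def using padic_no_zero_divisors p_power_neq_0 poly_newton_poly_neq_0 nodes by blast
  then obtain V where "d dvd \<p> ^ V" using dvd_p_power_if_nonzero by blast
  moreover obtain n where n: "M \<le> n" "\<p> ^ V dvd z n - \<p> ^ E * poly G (b k)"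
    using dense[of "\<p> ^ E * poly G (b k)"] by auto
  ultimately obtain c where "z n - \<p> ^ E * poly G (b k) = d * c" by (meson dvd_trans dvdE)
  then have "z n = \<p> ^ E * poly (G + smult c (newton_poly b k)) (b k)"
    by (simp add: d_def algebra_simps)
  then show ?thesis using n(1) by blast
qed

lemma interpolating_polys_exist:
  fixes z b :: "nat \<Rightarrow> 'p padic"
  assumes inj: "inj b"
    and dense: "\<And>t V M. \<p> ^ E dvd t \<Longrightarrow> \<exists>n\<ge>M. \<p> ^ V dvd z n - t"
  shows "\<exists>G nk. (\<forall>k. k * k \<le> nk k)
    \<and> (\<forall>k L. k \<le> L \<longrightarrow> z (nk k) = \<p> ^ E * poly (G L) (b k))
    \<and> (\<forall>L. \<exists>c. G (Suc L) = G L + smult c (newton_poly b (Suc L)))"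
proof -
  \<comment> \<open>state after step \<open>k\<close>: the polynomial and the indices chosen for the nodes
    \<open>b 0, \<dots>, b k\<close>\<close>
  define P where "P = (\<lambda>k (G, ns). \<forall>j\<le>k. j * j \<le> ns j \<and> z (ns j) = \<p> ^ E * poly G (b j))"
  define R where "R = (\<lambda>k (G :: 'p padic poly, ns :: nat \<Rightarrow> nat) (G', ns').
    (\<exists>c. G' = G + smult c (newton_poly b (Suc k)))
    \<and> (\<forall>j\<le>k. ns' j = ns j))"
  have nodes: "\<And>j. j < k \<Longrightarrow> b k \<noteq> b j" for k using inj by (auto dest: injD)
  have "\<exists>x. P 0 x"
  proof -
    obtain c n where "z n = \<p> ^ E * poly (0 + smult c (newton_poly b 0)) (b 0)"
      using newton_step[where z=z and b=b and E=E and k=0 and M=0 and G=0, OF _ dense] by auto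
    then have "P 0 (smult c (newton_poly b 0), \<lambda>_. n)" by (simp add: P_def)
    then show ?thesis by blast
  qed
  moreover have "\<exists>y. P (Suc k) y \<and> R k x y" if "P k x" for k x
  proof -
    obtain G ns where x: "x = (G, ns)" by fastforce
    obtain c n where n: "Suc k * Suc k \<le> n"
      "z n = \<p> ^ E * poly (G + smult c (newton_poly b (Suc k))) (b (Suc k))"
      using newton_step[where z=z and b=b and E=E and k="Suc k" and G=G, OF nodes dense] by blast
    have "poly (G + smult c (newton_poly b (Suc k))) (b j) = poly G (b j)" if "j \<le> k" for j
      using that by (simp add: poly_newton_poly_node)
    then have "P (Suc k) (G + smult c (newton_poly b (Suc k)), ns(Suc k := n))"
      using \<open>P k x\<close> n by (auto simp: P_def x le_Suc_eq)
    moreover have "R k x (G + smult c (newton_poly b (Suc k)), ns(Suc k := n))"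
      by (auto simp: R_def x)
    ultimately show ?thesis by blast
  qed
  ultimately obtain f where f: "\<And>k. P k (f k)" "\<And>k. R k (f k) (f (Suc k))"
    using dependent_nat_choice[of P R] by blast
  define G where "G = (\<lambda>k. fst (f k))"
  define nk where "nk = (\<lambda>k. snd (f k) k)"
  have stable: "snd (f L) k = nk k" if "k \<le> L" for k L
    using that
  proof (induction L rule: dec_induct)
    case (step L)
    then show ?case using f(2)[of L] by (auto simp: R_def split: prod.splits)
  qed (simp add: nk_def)
  have "k * k \<le> nk k" for k using f(1)[of k] by (auto simp: P_def nk_def split: prod.splits)
  moreover have "z (nk k) = \<p> ^ E * poly (G L) (b k)" if "k \<le> L" for k L
    using f(1)[of L] stable[OF that] that by (auto simp: P_def G_def split: prod.splits)
  moreover have "\<exists>c. G (Suc L) = G L + smult c (newton_poly b (Suc L))" for L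
    using f(2)[of L] by (auto simp: R_def G_def split: prod.splits)
  ultimately show ?thesis by blast
qed

lemma interpolating_series_exists:
  fixes z b :: "nat \<Rightarrow> 'p padic"
  assumes "inj b" and b: "\<And>j. \<p> dvd b j"
    and "\<And>t V M. \<p> ^ E dvd t \<Longrightarrow> \<exists>n\<ge>M. \<p> ^ V dvd z n - t"
  shows "\<exists>g nk. \<forall>k. k * k \<le> nk k \<and> z (nk k) = \<p> ^ E * eval1 g (b k)"
proof -
  obtain G nk where nk: "\<And>k. k * k \<le> nk k"
    and val: "\<And>k L. k \<le> L \<Longrightarrow> z (nk k) = \<p> ^ E * poly (G L) (b k)"
    and G: "\<And>L. \<exists>c. G (Suc L) = G L + smult c (newton_poly b (Suc L))"
    using interpolating_polys_exist[OF assms(1,3)] by metis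
  have "\<p> ^ (Suc L - i) dvd coeff (G (Suc L)) i - coeff (G L) i" for L i
    using G[of L] coeff_newton_poly_dvd[OF b, of "Suc L" i] by auto
  then obtain l where l: "\<And>K j L. K + j \<le> L \<Longrightarrow> \<p> ^ K dvd l j - coeff (G L) j"
    using coeffwise_limit_exists by metis
  have "eval1 (Abs_fps l) (b k) = poly (G k) (b k)" for k
  proof (rule eval1_coeffwise_limit[OF l b])
    fix L assume "k \<le> L"
    then have "\<p> ^ E * poly (G L) (b k) = \<p> ^ E * poly (G k) (b k)" using val[of k L] val[of k k] by simp
    then show "poly (G L) (b k) = poly (G k) (b k)" by (rule padic_mult_left_cancel[OF p_power_neq_0])
  qed
  then have "\<forall>k. k * k \<le> nk k \<and> z (nk k) = \<p> ^ E * eval1 (Abs_fps l) (b k)"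
    using nk val by simp
  then show ?thesis by blast
qed

end

section \<open>Points on a parabola avoid finite unions of lines\<close>

lemma line_point_quadratic_bound:
  fixes a b c :: real
  assumes ab: "(a, b) \<noteq> (0, 0)" and eq: "a * real n + b * (real q * real k) = c"
    and A: "k * k \<le> n" and q: "1 \<le> q"
  shows "real k \<le> (\<bar>c\<bar> + \<bar>b\<bar> * real q) / \<bar>a\<bar> + \<bar>c\<bar> / \<bar>b\<bar> + 1"
proof -
  define R where "R = (\<bar>c\<bar> + \<bar>b\<bar> * real q) / \<bar>a\<bar> + \<bar>c\<bar> / \<bar>b\<bar> + 1"
  show ?thesis
  proof (cases "a = 0")
    case True
    then have "c = b * (real q * real k)" using eq by simp
    then have "\<bar>b\<bar> * (real q * real k) = \<bar>c\<bar>" by (simp add: abs_mult)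
    moreover have "real k \<le> real q * real k" using q by (simp add: mult_le_cancel_right1)
    ultimately have "\<bar>b\<bar> * real k \<le> \<bar>c\<bar>" by (metis abs_ge_zero mult_left_mono)
    then have "real k \<le> \<bar>c\<bar> / \<bar>b\<bar>" using ab True by (simp add: field_simps)
    moreover have "0 \<le> (\<bar>c\<bar> + \<bar>b\<bar> * real q) / \<bar>a\<bar>" by simp
    ultimately show ?thesis unfolding R_def by linarith
  next
    case False
    \<comment> \<open>\<open>|a| k^2 \<le> |a| n = |c - b q k| \<le> |c| + |b| q k\<close>\<close>
    have "\<bar>a\<bar> * real n = \<bar>c - b * (real q * real k)\<bar>"
      using eq by (metis abs_mult abs_of_nat add_diff_cancel_right')
    also have "\<dots> \<le> \<bar>c\<bar> + \<bar>b * (real q * real k)\<bar>" by (rule abs_triangle_ineq4)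
    also have "\<bar>b * (real q * real k)\<bar> = \<bar>b\<bar> * real q * real k" by (simp add: abs_mult)
    finally have h: "\<bar>a\<bar> * real n \<le> \<bar>c\<bar> + \<bar>b\<bar> * real q * real k" .
    have "real k * real k \<le> real n" using A by (metis of_nat_le_iff of_nat_mult)
    then have h2: "\<bar>a\<bar> * (real k * real k) \<le> \<bar>c\<bar> + \<bar>b\<bar> * real q * real k"
      using h by (meson abs_ge_zero mult_left_mono order_trans)
    show ?thesis
    proof (cases "k = 0")
      case True
      then show ?thesis unfolding R_def by simp
    next
      case False
      then have k1: "1 \<le> real k" by simp
      then have "\<bar>c\<bar> \<le> \<bar>c\<bar> * real k" by (simp add: mult_le_cancel_left1)
      then have "(\<bar>a\<bar> * real k) * real k \<le> (\<bar>c\<bar> + \<bar>b\<bar> * real q) * real k"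
        using h2 by (simp add: algebra_simps)
      then have "\<bar>a\<bar> * real k \<le> \<bar>c\<bar> + \<bar>b\<bar> * real q" using k1 by simp
      then have "real k \<le> (\<bar>c\<bar> + \<bar>b\<bar> * real q) / \<bar>a\<bar>" using \<open>a \<noteq> 0\<close> by (simp add: field_simps)
      moreover have "0 \<le> \<bar>c\<bar> / \<bar>b\<bar>" by simp
      ultimately show ?thesis unfolding R_def by linarith
    qed
  qed
qed

lemma finite_line_points_quadratic:
  fixes A :: "nat \<Rightarrow> nat"
  assumes A: "\<And>k. k * k \<le> A k" and q: "1 \<le> q" and l: "is_line l"
  shows "finite {k. (A k, q * k) \<in> l}"
proof -
  obtain a b c :: real where ab: "(a, b) \<noteq> (0, 0)" and l: "l = {(x, y). a * real x + b * real y = c}"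
    using l unfolding is_line_def by blast
  define R where "R = (\<bar>c\<bar> + \<bar>b\<bar> * real q) / \<bar>a\<bar> + \<bar>c\<bar> / \<bar>b\<bar> + 1"
  have "{k. (A k, q * k) \<in> l} \<subseteq> {..nat \<lceil>R\<rceil>}"
  proof
    fix k assume "k \<in> {k. (A k, q * k) \<in> l}"
    then have "a * real (A k) + b * (real q * real k) = c" using l by simp
    then have "real k \<le> R" unfolding R_def by (rule line_point_quadratic_bound[OF ab _ A q])
    then show "k \<in> {..nat \<lceil>R\<rceil>}" by (simp add: le_nat_iff le_ceiling_iff)
  qed
  then show ?thesis by (rule finite_subset) simp
qed

lemma quadratic_points_not_in_finite_union_of_lines:
  fixes A :: "nat \<Rightarrow> nat"
  assumes A: "\<And>k. k * k \<le> A k" and q: "1 \<le> q"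
  shows "infinite (range (\<lambda>k. (A k, q * k)))"
    and "\<not> (\<exists>\<L>. finite \<L> \<and> (\<forall>L \<in> \<L>. is_line L) \<and> range (\<lambda>k. (A k, q * k)) \<subseteq> \<Union>\<L>)"
proof -
  have "inj (\<lambda>k. (A k, q * k))" using q by (intro injI) auto
  then show "infinite (range (\<lambda>k. (A k, q * k)))" by (simp add: finite_image_iff)
  show "\<not> (\<exists>\<L>. finite \<L> \<and> (\<forall>L \<in> \<L>. is_line L) \<and> range (\<lambda>k. (A k, q * k)) \<subseteq> \<Union>\<L>)"
  proof
    assume "\<exists>\<L>. finite \<L> \<and> (\<forall>L \<in> \<L>. is_line L) \<and> range (\<lambda>k. (A k, q * k)) \<subseteq> \<Union>\<L>"
    then obtain \<L> where \<L>: "finite \<L>" "\<forall>L \<in> \<L>. is_line L" "range (\<lambda>k. (A k, q * k)) \<subseteq> \<Union>\<L>"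
      by blast
    then have "UNIV = (\<Union>L\<in>\<L>. {k. (A k, q * k) \<in> L})" by blast
    moreover have "finite (\<Union>L\<in>\<L>. {k. (A k, q * k) \<in> L})"
      using \<L>(1,2) finite_line_points_quadratic[OF A q] by blast
    ultimately show False by (metis infinite_UNIV_nat)
  qed
qed

section \<open>The vanishing power series\<close>

lemma (in fgl_orbit) quasi_additive_orbit:
  "quasi_additive_seq (\<lambda>n. fgl_mult_at F (CARD('p) * n) \<alpha>)"
  by unfold_locales (use fgl_mult_at_quasi_additive in \<open>simp_all add: fgl_mult_at_0 p_dvd_fgl_mult_at\<close>)

context prime_card
begin

lemma vanishing_series_nontorsion:
  fixes z w :: "nat \<Rightarrow> 'p padic"
  assumes "quasi_additive_seq z" "quasi_additive_seq w" "z 1 \<noteq> 0" "w 1 \<noteq> 0"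
  shows "\<exists>\<phi>. \<phi> \<noteq> 0 \<and> (\<exists>A. (\<forall>k. k * k \<le> A k) \<and> (\<forall>k. eval2 \<phi> (z (A k)) (w k) = 0))"
proof -
  interpret z: quasi_additive_seq ty z by fact
  interpret w: quasi_additive_seq ty w by fact
  obtain E u where Eu: "z 1 = \<p> ^ E * u" "\<not> \<p> dvd u"
    using padic_factor_p_power \<open>z 1 \<noteq> 0\<close> by blast
  obtain E' u' where "w 1 = \<p> ^ E' * u'" "\<not> \<p> dvd u'"
    using padic_factor_p_power \<open>w 1 \<noteq> 0\<close> by blast
  then have "inj w" by (rule w.inj)
  then obtain g A where "\<forall>k. k * k \<le> A k \<and> z (A k) = \<p> ^ E * eval1 g (w k)"
    using interpolating_series_exists[where z=z and b=w and E=E, OF _ w.p_dvd z.dense[OF Eu]] by blast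
  then have A: "\<And>k. k * k \<le> A k" "\<And>k. z (A k) = \<p> ^ E * eval1 g (w k)" by simp_all
  \<comment> \<open>\<open>\<phi> = X - p^E g(Y)\<close>: as \<open>\<phi> $ i $ j\<close> is the coefficient of \<open>X^i Y^j\<close>, \<open>fps_const h\<close> is \<open>h(Y)\<close>\<close>
  define \<phi> where "\<phi> = fps_X - fps_const (fps_const (\<p> ^ E) * g)"
  have "\<phi> $ 1 $ 0 = 1" by (simp add: \<phi>_def)
  then have "\<phi> \<noteq> 0" by auto
  moreover have "eval2 \<phi> (z (A k)) (w k) = z (A k) - \<p> ^ E * eval1 g (w k)" for k
    using z.p_dvd[of "A k"] w.p_dvd[of k]
    by (simp add: \<phi>_def eval2_diff eval2_fps_X eval2_fps_const eval1_fps_const_mult)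
  then have "eval2 \<phi> (z (A k)) (w k) = 0" for k by (simp add: A(2))
  ultimately show ?thesis using A(1) by blast
qed

lemma vanishing_series_exists:
  fixes z w :: "nat \<Rightarrow> 'p padic"
  assumes "quasi_additive_seq z" "quasi_additive_seq w"
  shows "\<exists>\<phi>. \<phi> \<noteq> 0 \<and> (\<exists>A. (\<forall>k. k * k \<le> A k) \<and> (\<forall>k. eval2 \<phi> (z (A k)) (w k) = 0))"
proof -
  interpret z: quasi_additive_seq ty z by fact
  interpret w: quasi_additive_seq ty w by fact
  consider "z 1 = 0" | "w 1 = 0" | "z 1 \<noteq> 0" "w 1 \<noteq> 0" by blast
  then show ?thesis
  proof cases
    case 1
    then have "eval2 fps_X (z (k * k)) (w k) = 0" for k
      using z.eq_0_if_one_eq_0 z.p_dvd by (simp add: eval2_fps_X)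
    then show ?thesis by (intro exI[of _ fps_X]) (auto intro!: exI[of _ "\<lambda>k. k * k"])
  next
    case 2
    then have "eval2 (fps_const fps_X) (z (k * k)) (w k) = 0" for k
      using w.eq_0_if_one_eq_0 w.p_dvd by (simp add: eval2_fps_const eval1_fps_X)
    then show ?thesis by (intro exI[of _ "fps_const fps_X"]) (auto intro!: exI[of _ "\<lambda>k. k * k"])
  qed (rule vanishing_series_nontorsion[OF assms])
qed

end

theorem proposition2p11:
  fixes F :: "'p::nontriv_card padic fps fps"
    and \<alpha>1 \<alpha>2 :: "'p padic"
  assumes "prime CARD('p)"
    and "formal_group_law F"
    and "finite_height F"
    and "(of_nat CARD('p) :: 'p padic) dvd \<alpha>1"
    and "(of_nat CARD('p) :: 'p padic) dvd \<alpha>2"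
    and "padic_val \<alpha>1 = padic_val \<alpha>2"
  shows "\<exists>\<phi> :: 'p padic fps fps. \<phi> \<noteq> 0 \<and>
           (\<exists>S :: (nat \<times> nat) set. infinite S \<and>
              (\<forall>(n, m) \<in> S. eval2 \<phi> (fgl_mult_at F n \<alpha>1) (fgl_mult_at F m \<alpha>2) = 0) \<and>
              \<not> (\<exists>\<L>. finite \<L> \<and> (\<forall>L \<in> \<L>. is_line L) \<and> S \<subseteq> \<Union>\<L>))"
proof -
  interpret prime_card "TYPE('p)" by unfold_locales fact
  interpret o1: fgl_orbit "TYPE('p)" F \<alpha>1 by unfold_locales fact+
  interpret o2: fgl_orbit "TYPE('p)" F \<alpha>2 by unfold_locales fact+
  obtain \<phi> A where "\<phi> \<noteq> 0" and A: "\<And>k. k * k \<le> A k"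
    and vanish: "\<And>k. eval2 \<phi> (fgl_mult_at F (CARD('p) * A k) \<alpha>1) (fgl_mult_at F (CARD('p) * k) \<alpha>2) = 0"
    using vanishing_series_exists[OF o1.quasi_additive_orbit o2.quasi_additive_orbit] by blast
  define S where "S = range (\<lambda>k. (CARD('p) * A k, CARD('p) * k))"
  have p: "1 \<le> CARD('p)" using card_gt1[where 'a='p] by simp
  have "k * k \<le> CARD('p) * A k" for k
    using A[of k] mult_le_mono1[OF p, of "A k"] by linarith
  moreover note p
  ultimately have "infinite S" "\<not> (\<exists>\<L>. finite \<L> \<and> (\<forall>L \<in> \<L>. is_line L) \<and> S \<subseteq> \<Union>\<L>)"
    unfolding S_def by (rule quadratic_points_not_in_finite_union_of_lines)+
  moreover have "\<forall>(n, m) \<in> S. eval2 \<phi> (fgl_mult_at F n \<alpha>1) (fgl_mult_at F m \<alpha>2) = 0"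
    using vanish by (auto simp: S_def)
  ultimately show ?thesis using \<open>\<phi> \<noteq> 0\<close> by blast
qed

end
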